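(* Let $K\ge 1$, $n_1,\ldots,n_K$ be positive integers, $\Omega\subseteq\{1,\ldots,n_1\}\times\cdots\times\{1,\ldots,n_K\}$ an index set, $\mathcal{Y}_\Omega\in\mathbb{R}^{n_1\times\cdots\times n_K}$ a tensor supported on $\Omega$, $C>0$ and $\lambda_1,\ldots,\lambda_K>0$. Consider the nonnegative low-rank tensor completion problem $$\min_{\substack{\Theta_k\in\mathcal{P}^{n_k},\ \mathcal{W}^{(k)}\in\mathbb{R}^{n_1\times\cdots\times n_K}\\ k\in\{1,\ldots,K\}}}\ C\,\big\|\mathcal{W}_\Omega-\mathcal{Y}_\Omega\big\|^2+\sum_{k=1}^K\frac{1}{2\lambda_k}\big\langle \Theta_k^{\dagger}W^{(k)}_k,\,W^{(k)}_k\big\rangle\quad\text{subject to}\quad \mathcal{W}\ge 0,$$ where $\mathcal{W}=\sum_{k=1}^K\mathcal{W}^{(k)}$. An equivalent partial dual formulation of this problem is $$\min_{\substack{\Theta_k\in\mathcal{P}^{n_k}\\ k\in\{1,\ldots,K\}}}\ \max_{\substack{\mathcal{Z}\in\mathcal{C}\\ \mathcal{S}\in\mathbb{R}_+^{n_1\times\cdots\times n_K}}}\ \langle\mathcal{Z},\mathcal{Y}_\Omega\rangle-\frac{1}{4C}\|\mathcal{Z}\|^2-\sum_{k=1}^K\frac{\lambda_k}{2}\big\langle Z_k+S_k,\ \Theta_k(Z_k+S_k)\big\rangle,$$ where $\mathcal{C}=\{\mathcal{Z}\in\mathbb{R}^{n_1\times\cdots\times n_K}:\ \mathcal{Z}=\mathcal{Z}_\Omega\}$;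 here $\mathcal{Z}$ is the dual tensor variable corresponding to the primal problem and $\mathcal{S}$ is the dual tensor variable corresponding to the nonnegativity constraint $\mathcal{W}\ge 0$.
   Context: For a tensor $\mathcal{W}\in\mathbb{R}^{n_1\times\cdots\times n_K}$, $\mathcal{W}_\Omega$ denotes the tensor with $(\mathcal{W}_\Omega)_{i_1,\ldots,i_K}=\mathcal{W}_{i_1,\ldots,i_K}$ if $(i_1,\ldots,i_K)\in\Omega$ and $0$ otherwise. The inner product of two same-sized tensors (or matrices) is $\langle\mathcal{W},\mathcal{U}\rangle=\sum_{i_1,\ldots,i_K}\mathcal{W}_{i_1,\ldots,i_K}\mathcal{U}_{i_1,\ldots,i_K}$, and $\|\cdot\|$ is the induced (Frobenius) norm. $\mathcal{W}\ge 0$ means all entries are nonnegative, and $\mathbb{R}_+^{n_1\times\cdots\times n_K}$ is the set of entrywise nonnegative tensors. For a tensor $\mathcal{W}$, the mode-$k$ unfolding $W_k\in\mathbb{R}^{n_k\times n_1\cdots n_{k-1}n_{k+1}\cdots n_K}$ is the matrix whose columns are the mode-$k$ fibers $\mathcal{W}_{i_1,\ldots,i_{k-1},:,i_{k+1},\ldots,i_K}$; thus $W^{(k)}_k$, $Z_k$, $S_k$ are the mode-$k$ unfoldings of $\mathcal{W}^{(k)}$, $\mathcal{Z}$, $\mathcal{S}$ respectively. $\mathcal{P}^d=\{\Theta\in\mathbb{R}^{d\times d}:\ \Theta\succeq 0,\ \mathrm{tr}(\Theta)=1\}$, and $\Theta^\dagger$ denotes the Moore–Penrose pseudo-inverse of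 $\Theta$. *)

theory Defs
  imports Complex_Main "HOL-Library.Extended_Real"
begin

text \<open>Tensors of order K with sizes n 0, ..., n (K-1) (0-based indices) are functions on
  index tuples i :: nat \<Rightarrow> nat; only the values on the index set matter.\<close>

definition idx :: "nat \<Rightarrow> (nat \<Rightarrow> nat) \<Rightarrow> (nat \<Rightarrow> nat) set" where
  "idx K n = {i. (\<forall>k<K. i k < n k) \<and> (\<forall>k. K \<le> k \<longrightarrow> i k = 0)}"

definition restr :: "(nat \<Rightarrow> nat) set \<Rightarrow> ((nat \<Rightarrow> nat) \<Rightarrow> real) \<Rightarrow> (nat \<Rightarrow> nat) \<Rightarrow> real" where
  "restr \<Omega> W = (\<lambda>i. if i \<in> \<Omega> then W i else 0)"

definition tinner :: "nat \<Rightarrow> (nat \<Rightarrow> nat) \<Rightarrow> ((nat \<Rightarrow> nat) \<Rightarrow> real) \<Rightarrow> ((nat \<Rightarrow> nat) \<Rightarrow> real) \<Rightarrow> real" where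
  "tinner K n A B = (\<Sum>i\<in>idx K n. A i * B i)"

definition tnorm2 :: "nat \<Rightarrow> (nat \<Rightarrow> nat) \<Rightarrow> ((nat \<Rightarrow> nat) \<Rightarrow> real) \<Rightarrow> real" where
  "tnorm2 K n A = tinner K n A A"

definition matmul :: "nat \<Rightarrow> (nat \<Rightarrow> nat \<Rightarrow> real) \<Rightarrow> (nat \<Rightarrow> nat \<Rightarrow> real) \<Rightarrow> nat \<Rightarrow> nat \<Rightarrow> real" where
  "matmul d A B = (\<lambda>i j. \<Sum>l<d. A i l * B l j)"

definition is_pinv :: "nat \<Rightarrow> (nat \<Rightarrow> nat \<Rightarrow> real) \<Rightarrow> (nat \<Rightarrow> nat \<Rightarrow> real) \<Rightarrow> bool" where
  "is_pinv d A X \<longleftrightarrow>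
     (\<forall>i j. \<not> (i < d \<and> j < d) \<longrightarrow> X i j = 0) \<and>
     (\<forall>i<d. \<forall>j<d. matmul d (matmul d A X) A i j = A i j) \<and>
     (\<forall>i<d. \<forall>j<d. matmul d (matmul d X A) X i j = X i j) \<and>
     (\<forall>i<d. \<forall>j<d. matmul d A X i j = matmul d A X j i) \<and>
     (\<forall>i<d. \<forall>j<d. matmul d X A i j = matmul d X A j i)"

definition pinv :: "nat \<Rightarrow> (nat \<Rightarrow> nat \<Rightarrow> real) \<Rightarrow> nat \<Rightarrow> nat \<Rightarrow> real" where
  "pinv d A = (THE X. is_pinv d A X)"

definition qf :: "nat \<Rightarrow> (nat \<Rightarrow> nat \<Rightarrow> real) \<Rightarrow> (nat \<Rightarrow> real) \<Rightarrow> real" where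
  "qf d M x = (\<Sum>a<d. \<Sum>b<d. x a * M a b * x b)"

definition spectraplex :: "nat \<Rightarrow> (nat \<Rightarrow> nat \<Rightarrow> real) \<Rightarrow> bool" where
  "spectraplex d \<Theta> \<longleftrightarrow>
     (\<forall>i<d. \<forall>j<d. \<Theta> i j = \<Theta> j i) \<and> (\<forall>x. 0 \<le> qf d \<Theta> x) \<and> (\<Sum>i<d. \<Theta> i i) = 1"

definition in_range :: "nat \<Rightarrow> (nat \<Rightarrow> nat \<Rightarrow> real) \<Rightarrow> (nat \<Rightarrow> real) \<Rightarrow> bool" where
  "in_range d M f \<longleftrightarrow> (\<exists>x. \<forall>a<d. (\<Sum>b<d. M a b * x b) = f a)"

text \<open>Mode-k fibre through index tuple i; the columns of the mode-k unfolding are the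
  fibres through the tuples i with i k = 0.\<close>
definition fiber :: "nat \<Rightarrow> ((nat \<Rightarrow> nat) \<Rightarrow> real) \<Rightarrow> (nat \<Rightarrow> nat) \<Rightarrow> nat \<Rightarrow> real" where
  "fiber k W i = (\<lambda>a. W (i(k := a)))"

definition fibers :: "nat \<Rightarrow> (nat \<Rightarrow> nat) \<Rightarrow> nat \<Rightarrow> (nat \<Rightarrow> nat) set" where
  "fibers K n k = {i \<in> idx K n. i k = 0}"

text \<open>\<langle>M W_k, W_k\<rangle> for the mode-k unfolding W_k.\<close>
definition unfold_qf :: "nat \<Rightarrow> (nat \<Rightarrow> nat) \<Rightarrow> nat \<Rightarrow> (nat \<Rightarrow> nat \<Rightarrow> real) \<Rightarrow> ((nat \<Rightarrow> nat) \<Rightarrow> real) \<Rightarrow> real" where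
  "unfold_qf K n k M W = (\<Sum>i\<in>fibers K n k. qf (n k) M (fiber k W i))"

text \<open>\<langle>\<Theta>^\<dagger> W_k, W_k\<rangle> with the standard convention that it is +\<infinity> unless the
  column space of W_k lies in the range of \<Theta>.\<close>
definition pinv_term :: "nat \<Rightarrow> (nat \<Rightarrow> nat) \<Rightarrow> nat \<Rightarrow> (nat \<Rightarrow> nat \<Rightarrow> real) \<Rightarrow> ((nat \<Rightarrow> nat) \<Rightarrow> real) \<Rightarrow> ereal" where
  "pinv_term K n k \<Theta> W =
     (if (\<forall>i\<in>fibers K n k. in_range (n k) \<Theta> (fiber k W i))
      then ereal (unfold_qf K n k (pinv (n k) \<Theta>) W) else \<infinity>)"

definition primal_obj :: "nat \<Rightarrow> (nat \<Rightarrow> nat) \<Rightarrow> (nat \<Rightarrow> nat) set \<Rightarrow> ((nat \<Rightarrow> nat) \<Rightarrow> real) \<Rightarrow> real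
    \<Rightarrow> (nat \<Rightarrow> real) \<Rightarrow> (nat \<Rightarrow> nat \<Rightarrow> nat \<Rightarrow> real) \<Rightarrow> (nat \<Rightarrow> (nat \<Rightarrow> nat) \<Rightarrow> real) \<Rightarrow> ereal" where
  "primal_obj K n \<Omega> Y C lam \<Theta> Wf =
     (let W = (\<lambda>i. \<Sum>k<K. Wf k i) in
      ereal (C * tnorm2 K n (\<lambda>i. restr \<Omega> W i - restr \<Omega> Y i))
      + (\<Sum>k<K. ereal (1 / (2 * lam k)) * pinv_term K n k (\<Theta> k) (Wf k)))"

definition dual_obj :: "nat \<Rightarrow> (nat \<Rightarrow> nat) \<Rightarrow> (nat \<Rightarrow> nat) set \<Rightarrow> ((nat \<Rightarrow> nat) \<Rightarrow> real) \<Rightarrow> real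
    \<Rightarrow> (nat \<Rightarrow> real) \<Rightarrow> (nat \<Rightarrow> nat \<Rightarrow> nat \<Rightarrow> real) \<Rightarrow> ((nat \<Rightarrow> nat) \<Rightarrow> real) \<Rightarrow> ((nat \<Rightarrow> nat) \<Rightarrow> real) \<Rightarrow> real" where
  "dual_obj K n \<Omega> Y C lam \<Theta> Z S =
     tinner K n Z (restr \<Omega> Y) - 1 / (4 * C) * tnorm2 K n Z
     - (\<Sum>k<K. lam k / 2 * unfold_qf K n k (\<Theta> k) (\<lambda>i. Z i + S i))"

end

(*
  For fixed \<Theta> the inner problem is a convex quadratic program in W = (W^(1), ..., W^(K)),
  whose penalty <\<Theta>_k^+ W_k, W_k> is finite only when the columns of W_k lie in the range of
  \<Theta>_k. Weak duality: for Z supported on \<Omega> and S \<ge> 0, completing the square in the data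
  term and Young's inequality <V, W_k> \<le> <\<Theta>_k^+ W_k, W_k>/(2 \<lambda>_k) + \<lambda>_k/2 <V, \<Theta>_k V>
  with V = Z + S bound the dual objective by the primal one.
  Equality: the primal minimum is attained, because \<Theta>_k^2 \<preceq> \<Theta>_k makes the objective coercive
  and the range condition is closed. At a minimizer W the first-order condition along the
  feasible directions \<Theta>_k X_k, combined with Farkas' lemma, yields a multiplier S \<ge> 0 for
  the constraint \<Sigma>_k W_k \<ge> 0 with complementary slackness; then W_k = \<lambda>_k \<Theta>_k (Z + S) for
  Z = -2C (W_\<Omega> - Y_\<Omega>), and (Z, S) attains the primal value. Taking the infimum over \<Theta>
  on both sides gives the theorem.
*)
theory Submission
  imports Defs
begin

section \<open>Farkas' lemma\<close>

definition dot_on :: "'i set \<Rightarrow> ('i \<Rightarrow> real) \<Rightarrow> ('i \<Rightarrow> real) \<Rightarrow> real" where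
  "dot_on I x y = (\<Sum>i\<in>I. x i * y i)"

lemma dot_on_add_scaled_left: "dot_on I (\<lambda>i. y i + s * z i) v = dot_on I y v + s * dot_on I z v"
  by (simp add: dot_on_def sum.distrib sum_distrib_left algebra_simps)

lemma dot_on_lincomb_right: "dot_on I y (\<lambda>i. p * u i + q * v i) = p * dot_on I y u + q * dot_on I y v"
  by (simp add: dot_on_def sum.distrib sum_distrib_left algebra_simps)

text \<open>Fourier-Motzkin elimination of the generator \<open>h\<close>: projecting along a \<open>y\<^sub>0\<close> with
  \<open>\<langle>y\<^sub>0, a h\<rangle> < 0\<close> turns every \<open>y\<close> that is nonnegative on the projected generators into
  one that is nonnegative on \<open>a h\<close> and on the original generators.\<close>

lemma farkas_eliminate:
  assumes hyp: "\<forall>y. (\<forall>g\<in>insert h G. 0 \<le> dot_on I y (a g)) \<longrightarrow> 0 \<le> dot_on I y b"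
    and neg: "dot_on I y0 (a h) < 0"
  defines "\<alpha> \<equiv> - dot_on I y0 (a h)"
  shows "\<forall>y. (\<forall>g\<in>G. 0 \<le> dot_on I y (\<lambda>i. dot_on I y0 (a g) * a h i + \<alpha> * a g i))
             \<longrightarrow> 0 \<le> dot_on I y (\<lambda>i. dot_on I y0 b * a h i + \<alpha> * b i)"
proof (intro allI impI)
  fix y assume y: "\<forall>g\<in>G. 0 \<le> dot_on I y (\<lambda>i. dot_on I y0 (a g) * a h i + \<alpha> * a g i)"
  have \<alpha>: "\<alpha> > 0" using neg by (simp add: \<alpha>_def)
  define y' where "y' = (\<lambda>i. y i + dot_on I y (a h) / \<alpha> * y0 i)"
  have y': "dot_on I y (\<lambda>i. dot_on I y0 v * a h i + \<alpha> * v i) = \<alpha> * dot_on I y' v" for v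
    unfolding y'_def dot_on_add_scaled_left dot_on_lincomb_right using \<alpha> by (simp add: field_simps)
  have "dot_on I y' (a h) = 0"
    using \<alpha> unfolding y'_def dot_on_add_scaled_left by (simp add: \<alpha>_def)
  moreover have "0 \<le> dot_on I y' (a g)" if "g \<in> G" for g
    using y that \<alpha> unfolding y' by (simp add: zero_le_mult_iff)
  ultimately have "0 \<le> dot_on I y' b" using hyp by auto
  thus "0 \<le> dot_on I y (\<lambda>i. dot_on I y0 b * a h i + \<alpha> * b i)" using \<alpha> unfolding y' by simp
qed

lemma farkas_lift:
  assumes \<alpha>: "\<alpha> > 0" and y0: "\<forall>g\<in>G. 0 \<le> dot_on I y0 (a g)" "dot_on I y0 b \<le> 0"
    and c: "\<forall>g\<in>G. 0 \<le> c g"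
    and bc: "\<forall>i\<in>I. dot_on I y0 b * a h i + \<alpha> * b i
                = (\<Sum>g\<in>G. c g * (dot_on I y0 (a g) * a h i + \<alpha> * a g i))"
  shows "\<exists>ch\<ge>0. \<forall>i\<in>I. b i = ch * a h i + (\<Sum>g\<in>G. c g * a g i)"
proof (intro exI conjI ballI)
  define ch where "ch = ((\<Sum>g\<in>G. c g * dot_on I y0 (a g)) - dot_on I y0 b) / \<alpha>"
  have "0 \<le> (\<Sum>g\<in>G. c g * dot_on I y0 (a g))" using y0 c by (auto intro!: sum_nonneg)
  thus "0 \<le> ch" unfolding ch_def using \<alpha> y0 by simp
  fix i assume i: "i \<in> I"
  have "(\<Sum>g\<in>G. c g * (dot_on I y0 (a g) * a h i + \<alpha> * a g i))
      = a h i * (\<Sum>g\<in>G. c g * dot_on I y0 (a g)) + \<alpha> * (\<Sum>g\<in>G. c g * a g i)"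
    by (simp add: algebra_simps sum.distrib sum_distrib_left)
  thus "b i = ch * a h i + (\<Sum>g\<in>G. c g * a g i)"
    using bc[rule_format, OF i] \<alpha> unfolding ch_def by (simp add: field_simps)
qed

lemma nonneg_combination_insert:
  assumes "finite G" "h \<notin> G" "\<forall>g\<in>G. 0 \<le> c g" "0 \<le> ch"
    and "\<forall>i\<in>I. b i = ch * a h i + (\<Sum>g\<in>G. c g * a g i)"
  shows "\<exists>c. (\<forall>g\<in>insert h G. 0 \<le> c g) \<and> (\<forall>i\<in>I. b i = (\<Sum>g\<in>insert h G. c g * a g i))"
proof (intro exI[of _ "c(h := ch)"] conjI)
  have "(\<Sum>g\<in>G. (c(h := ch)) g * a g i) = (\<Sum>g\<in>G. c g * a g i)" for i
    using assms(2) by (intro sum.cong) auto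
  thus "\<forall>i\<in>I. b i = (\<Sum>g\<in>insert h G. (c(h := ch)) g * a g i)" using assms by simp
qed (use assms in auto)

lemma farkas_lemma:
  assumes "finite I" "finite G"
    and "\<forall>y. (\<forall>g\<in>G. 0 \<le> dot_on I y (a g)) \<longrightarrow> 0 \<le> dot_on I y b"
  shows "\<exists>c. (\<forall>g\<in>G. 0 \<le> c g) \<and> (\<forall>i\<in>I. b i = (\<Sum>g\<in>G. c g * a g i))"
  using assms(2,3)
proof (induction G arbitrary: a b rule: finite_induct)
  case empty
  have "0 \<le> dot_on I (\<lambda>i. - b i) b" using empty by simp
  hence "(\<Sum>i\<in>I. b i * b i) \<le> 0" by (simp add: dot_on_def sum_negf)
  hence "\<forall>i\<in>I. b i * b i = 0"
    using sum_nonneg_eq_0_iff[OF assms(1)] by (metis (no_types, lifting) antisym sum_nonneg zero_le_square)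
  thus ?case by simp
next
  case (insert h G)
  show ?case
  proof (cases "\<forall>y. (\<forall>g\<in>G. 0 \<le> dot_on I y (a g)) \<longrightarrow> 0 \<le> dot_on I y b")
    case True
    then obtain c where c: "\<forall>g\<in>G. 0 \<le> c g" "\<forall>i\<in>I. b i = (\<Sum>g\<in>G. c g * a g i)"
      using insert.IH by blast
    hence "\<forall>i\<in>I. b i = 0 * a h i + (\<Sum>g\<in>G. c g * a g i)" by simp
    thus ?thesis by (rule nonneg_combination_insert[OF insert.hyps c(1) order.refl])
  next
    case False
    then obtain y0 where y0: "\<forall>g\<in>G. 0 \<le> dot_on I y0 (a g)" "dot_on I y0 b < 0" by force
    have neg: "dot_on I y0 (a h) < 0"
    proof (rule ccontr)
      assume "\<not> dot_on I y0 (a h) < 0"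
      hence "0 \<le> dot_on I y0 b" using insert.prems y0(1) by auto
      thus False using y0(2) by simp
    qed
    define \<alpha> where "\<alpha> = - dot_on I y0 (a h)"
    have \<alpha>: "\<alpha> > 0" using neg by (simp add: \<alpha>_def)
    obtain c where c: "\<forall>g\<in>G. 0 \<le> c g"
      and bc: "\<forall>i\<in>I. dot_on I y0 b * a h i + \<alpha> * b i
                  = (\<Sum>g\<in>G. c g * (dot_on I y0 (a g) * a h i + \<alpha> * a g i))"
      using insert.IH[OF farkas_eliminate[OF insert.prems neg, folded \<alpha>_def]] by blast
    obtain ch where "0 \<le> ch" "\<forall>i\<in>I. b i = ch * a h i + (\<Sum>g\<in>G. c g * a g i)"
      using farkas_lift[OF \<alpha> y0(1) less_imp_le[OF y0(2)] c bc] by blast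
    thus ?thesis by (rule nonneg_combination_insert[OF insert.hyps c])
  qed
qed

text \<open>Fredholm alternative: Farkas' lemma for the columns of \<open>A\<close> and their negatives.\<close>

lemma linear_system_solvable:
  fixes A :: "nat \<Rightarrow> nat \<Rightarrow> real" and b :: "nat \<Rightarrow> real"
  assumes orth: "\<And>y. (\<forall>l<d. (\<Sum>a<d. y a * A a l) = 0) \<Longrightarrow> (\<Sum>a<d. y a * b a) = 0"
  shows "\<exists>x. \<forall>a<d. (\<Sum>l<d. A a l * x l) = b a"
proof -
  define col where "col = (\<lambda>(l::nat, s::bool) a. if s then A a l else - A a l)"
  have "\<forall>y. (\<forall>g\<in>{..<d} \<times> UNIV. 0 \<le> dot_on {..<d} y (col g)) \<longrightarrow> 0 \<le> dot_on {..<d} y b"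
  proof (intro allI impI)
    fix y assume y: "\<forall>g\<in>{..<d} \<times> UNIV. 0 \<le> dot_on {..<d} y (col g)"
    have "(\<Sum>a<d. y a * A a l) = 0" if "l < d" for l
    proof -
      have "0 \<le> dot_on {..<d} y (col (l, True))" "0 \<le> dot_on {..<d} y (col (l, False))"
        using y that by auto
      thus ?thesis by (simp add: col_def dot_on_def sum_negf)
    qed
    thus "0 \<le> dot_on {..<d} y b" using orth by (simp add: dot_on_def)
  qed
  moreover have "finite ({..<d} \<times> (UNIV :: bool set))" by simp
  ultimately obtain c where c: "\<forall>i\<in>{..<d}. b i = (\<Sum>g\<in>{..<d} \<times> UNIV. c g * col g i)"
    using farkas_lemma[OF finite_lessThan] by blast
  have "(\<Sum>l<d. A a l * (c (l, True) - c (l, False))) = b a" if "a < d" for a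
  proof -
    have "b a = (\<Sum>l<d. \<Sum>s\<in>UNIV. c (l, s) * col (l, s) a)"
      using c that by (simp add: sum.cartesian_product)
    also have "\<dots> = (\<Sum>l<d. A a l * (c (l, True) - c (l, False)))"
      by (intro sum.cong) (auto simp: UNIV_bool col_def algebra_simps)
    finally show ?thesis by (rule sym)
  qed
  thus ?thesis by (intro exI[of _ "\<lambda>l. c (l, True) - c (l, False)"] allI impI)
qed

section \<open>Moore-Penrose pseudo-inverse of a symmetric matrix\<close>

text \<open>\<open>matmul d\<close> only reads the \<open>d \<times> d\<close> block of its arguments. Zeroing everything outside the
  block (\<open>mblock\<close>) turns the entrywise Penrose conditions of \<open>is_pinv\<close> into equations
  between functions, where associativity and transposition can be used freely.\<close>

definition mtranspose :: "(nat \<Rightarrow> nat \<Rightarrow> real) \<Rightarrow> nat \<Rightarrow> nat \<Rightarrow> real" where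
  "mtranspose A = (\<lambda>i j. A j i)"

definition mblock :: "nat \<Rightarrow> (nat \<Rightarrow> nat \<Rightarrow> real) \<Rightarrow> nat \<Rightarrow> nat \<Rightarrow> real" where
  "mblock d A = (\<lambda>i j. if i < d \<and> j < d then A i j else 0)"

definition block_supported :: "nat \<Rightarrow> (nat \<Rightarrow> nat \<Rightarrow> real) \<Rightarrow> bool" where
  "block_supported d A \<longleftrightarrow> (\<forall>i j. \<not> (i < d \<and> j < d) \<longrightarrow> A i j = 0)"

definition penrose :: "nat \<Rightarrow> (nat \<Rightarrow> nat \<Rightarrow> real) \<Rightarrow> (nat \<Rightarrow> nat \<Rightarrow> real) \<Rightarrow> bool" where
  "penrose d A X \<longleftrightarrow>
     matmul d (matmul d A X) A = A \<and> matmul d (matmul d X A) X = X \<and>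
     mtranspose (matmul d A X) = matmul d A X \<and> mtranspose (matmul d X A) = matmul d X A"

lemma matmul_assoc: "matmul d (matmul d A B) C = matmul d A (matmul d B C)"
proof (intro ext)
  fix i j
  have "matmul d (matmul d A B) C i j = (\<Sum>l<d. \<Sum>m<d. A i m * B m l * C l j)"
    by (simp add: matmul_def sum_distrib_right)
  also have "\<dots> = (\<Sum>m<d. \<Sum>l<d. A i m * B m l * C l j)" by (rule sum.swap)
  also have "\<dots> = matmul d A (matmul d B C) i j"
    by (simp add: matmul_def sum_distrib_left mult.assoc)
  finally show "matmul d (matmul d A B) C i j = matmul d A (matmul d B C) i j" .
qed

lemma mtranspose_apply: "mtranspose A i j = A j i"
  by (simp add: mtranspose_def)

lemma mtranspose_matmul: "mtranspose (matmul d A B) = matmul d (mtranspose B) (mtranspose A)"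
  by (auto simp: mtranspose_def matmul_def mult.commute)

lemma mtranspose_mtranspose [simp]: "mtranspose (mtranspose A) = A"
  by (simp add: mtranspose_def)

lemma block_supported_mblock: "block_supported d (mblock d A)"
  by (simp add: block_supported_def mblock_def)

lemma block_supported_matmul: "block_supported d A \<Longrightarrow> block_supported d B \<Longrightarrow> block_supported d (matmul d A B)"
  by (auto simp: block_supported_def matmul_def)

lemma block_supported_matmul_outer:
  "block_supported d A \<Longrightarrow> block_supported d B \<Longrightarrow> block_supported d (matmul d (matmul d A C) B)"
  by (auto simp: block_supported_def matmul_def)

lemma block_supported_mtranspose: "block_supported d A \<Longrightarrow> block_supported d (mtranspose A)"
  by (auto simp: block_supported_def mtranspose_def)

lemma block_supported_eqI:
  "block_supported d A \<Longrightarrow> block_supported d B \<Longrightarrow> (\<And>i j. i < d \<Longrightarrow> j < d \<Longrightarrow> A i j = B i j) \<Longrightarrow> A = B"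
  unfolding block_supported_def by (intro ext) metis

lemma matmul_mblock_left: "i < d \<Longrightarrow> matmul d (mblock d T) X i j = matmul d T X i j"
  by (auto simp: matmul_def mblock_def intro!: sum.cong)

lemma matmul_mblock_right: "j < d \<Longrightarrow> matmul d X (mblock d T) i j = matmul d X T i j"
  by (auto simp: matmul_def mblock_def intro!: sum.cong)

lemma mblock_in_block: "i < d \<Longrightarrow> j < d \<Longrightarrow> mblock d T i j = T i j"
  by (simp add: mblock_def)

lemma matmul_mblock_outer:
  "i < d \<Longrightarrow> j < d \<Longrightarrow> matmul d (matmul d (mblock d T) X) (mblock d T) i j = matmul d (matmul d T X) T i j"
  by (auto simp: matmul_def mblock_def intro!: sum.cong)

lemma matmul_mblock_middle: "matmul d (matmul d X (mblock d T)) Y = matmul d (matmul d X T) Y"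
  unfolding matmul_def by (intro ext sum.cong refl) (simp add: mblock_def)

lemma is_pinv_iff_penrose: "is_pinv d T X \<longleftrightarrow> block_supported d X \<and> penrose d (mblock d T) X"
proof -
  let ?A = "mblock d T"
  have in_block: "(\<forall>i<d. \<forall>j<d. P i j = Q i j) \<longleftrightarrow> P = Q"
    if "block_supported d P" "block_supported d Q" for P Q
    using block_supported_eqI[OF that] by auto
  have "block_supported d X \<Longrightarrow>
      (\<forall>i<d. \<forall>j<d. matmul d (matmul d T X) T i j = T i j) \<longleftrightarrow> matmul d (matmul d ?A X) ?A = ?A"
    by (subst in_block[symmetric])
      (auto simp: block_supported_matmul block_supported_mblock matmul_mblock_outer mblock_in_block)
  moreover have "block_supported d X \<Longrightarrow>
      (\<forall>i<d. \<forall>j<d. matmul d (matmul d X T) X i j = X i j) \<longleftrightarrow> matmul d (matmul d X ?A) X = X"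
    by (subst in_block[symmetric]) (auto simp: block_supported_matmul_outer matmul_mblock_middle)
  moreover have "block_supported d X \<Longrightarrow>
      (\<forall>i<d. \<forall>j<d. matmul d T X i j = matmul d T X j i) \<longleftrightarrow> mtranspose (matmul d ?A X) = matmul d ?A X"
    by (subst in_block[symmetric])
      (auto simp: block_supported_matmul block_supported_mblock block_supported_mtranspose
        matmul_mblock_left mtranspose_apply)
  moreover have "block_supported d X \<Longrightarrow>
      (\<forall>i<d. \<forall>j<d. matmul d X T i j = matmul d X T j i) \<longleftrightarrow> mtranspose (matmul d X ?A) = matmul d X ?A"
    by (subst in_block[symmetric])
      (auto simp: block_supported_matmul block_supported_mblock block_supported_mtranspose
        matmul_mblock_right mtranspose_apply)
  ultimately show ?thesis
    unfolding is_pinv_def penrose_def block_supported_def[of d X, symmetric] by blast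
qed

lemma penrose_unique:
  assumes X: "penrose d A X" and Y: "penrose d A Y"
  shows "X = Y"
proof -
  have "matmul d A X = matmul d (matmul d A Y) (matmul d A X)"
    using Y by (metis penrose_def matmul_assoc)
  also have "\<dots> = mtranspose (matmul d (matmul d A X) (matmul d A Y))"
    using X Y by (simp add: penrose_def mtranspose_matmul)
  also have "matmul d (matmul d A X) (matmul d A Y) = matmul d A Y"
    using X by (metis penrose_def matmul_assoc)
  finally have AX: "matmul d A X = matmul d A Y" using Y by (simp add: penrose_def)
  have "matmul d X A = matmul d (matmul d X A) (matmul d Y A)"
    using Y by (metis penrose_def matmul_assoc)
  also have "\<dots> = mtranspose (matmul d (matmul d Y A) (matmul d X A))"
    using X Y by (simp add: penrose_def mtranspose_matmul)
  also have "matmul d (matmul d Y A) (matmul d X A) = matmul d Y A"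
    using X by (metis penrose_def matmul_assoc)
  finally have XA: "matmul d X A = matmul d Y A" using Y by (simp add: penrose_def)
  have "X = matmul d (matmul d Y A) X" using X XA by (simp add: penrose_def)
  also have "\<dots> = matmul d Y (matmul d A Y)" using AX by (simp add: matmul_assoc)
  also have "\<dots> = Y" using Y by (simp add: penrose_def matmul_assoc)
  finally show ?thesis .
qed

text \<open>For symmetric \<open>A\<close> every column of \<open>A\<close> lies in the range of \<open>A\<^sup>2\<close>: a vector \<open>y\<close> with
  \<open>y\<^sup>T A\<^sup>2 = 0\<close> has \<open>\<parallel>A y\<parallel>\<^sup>2 = 0\<close>.\<close>

lemma symmetric_column_in_range_square:
  assumes sym: "mtranspose A = A" and b: "b < d"
  shows "\<exists>x. \<forall>a<d. (\<Sum>l<d. matmul d A A a l * x l) = A a b"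
proof (rule linear_system_solvable)
  fix y assume h: "\<forall>l<d. (\<Sum>a<d. y a * matmul d A A a l) = 0"
  have S: "A i j = A j i" for i j using fun_cong[OF fun_cong[OF sym], of i j] by (simp add: mtranspose_def)
  define z where "z = (\<lambda>m. \<Sum>a<d. y a * A a m)"
  have hz: "(\<Sum>m<d. z m * A m l) = 0" if "l < d" for l
  proof -
    have "(\<Sum>m<d. z m * A m l) = (\<Sum>m<d. \<Sum>a<d. y a * A a m * A m l)"
      by (simp add: z_def sum_distrib_right)
    also have "\<dots> = (\<Sum>a<d. \<Sum>m<d. y a * A a m * A m l)" by (rule sum.swap)
    also have "\<dots> = (\<Sum>a<d. y a * matmul d A A a l)"
      by (simp add: matmul_def sum_distrib_left mult.assoc)
    finally show ?thesis using h that by simp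
  qed
  have "(\<Sum>m<d. z m * z m) = (\<Sum>m<d. \<Sum>l<d. z m * A m l * y l)"
    by (simp add: z_def sum_distrib_left S mult.assoc mult.commute)
  also have "\<dots> = (\<Sum>l<d. (\<Sum>m<d. z m * A m l) * y l)"
    by (subst sum.swap) (simp add: sum_distrib_right)
  also have "\<dots> = 0" using hz by simp
  finally have "\<forall>m\<in>{..<d}. z m * z m = 0"
    by (subst sum_nonneg_eq_0_iff[symmetric]) auto
  thus "(\<Sum>a<d. y a * A a b) = 0" using b by (simp add: z_def)
qed

definition pinv_factor :: "nat \<Rightarrow> (nat \<Rightarrow> nat \<Rightarrow> real) \<Rightarrow> nat \<Rightarrow> nat \<Rightarrow> real" where
  "pinv_factor d A = (\<lambda>l b. if l < d \<and> b < d then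
      (SOME x. \<forall>a<d. (\<Sum>l<d. matmul d A A a l * x l) = A a b) l else 0)"

lemma pinv_factor:
  assumes "mtranspose A = A" "block_supported d A"
  shows "matmul d (matmul d A A) (pinv_factor d A) = A" "block_supported d (pinv_factor d A)"
proof -
  show G: "block_supported d (pinv_factor d A)" by (simp add: block_supported_def pinv_factor_def)
  show "matmul d (matmul d A A) (pinv_factor d A) = A"
  proof (rule block_supported_eqI[OF block_supported_matmul[OF block_supported_matmul G] assms(2)])
    fix i j assume ij: "i < d" "j < d"
    have "\<forall>a<d. (\<Sum>l<d. matmul d A A a l *
        (SOME x. \<forall>a<d. (\<Sum>l<d. matmul d A A a l * x l) = A a j) l) = A a j"
      by (rule someI_ex[OF symmetric_column_in_range_square[OF assms(1) ij(2)]])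
    thus "matmul d (matmul d A A) (pinv_factor d A) i j = A i j"
      using ij by (simp add: matmul_def[of d "matmul d A A"] pinv_factor_def)
  qed (use assms in auto)
qed

text \<open>With \<open>A\<^sup>2 G = A\<close>, the matrix \<open>G\<^sup>T A G\<close> is the pseudo-inverse of the symmetric \<open>A\<close>;
  \<open>P = A G\<close> is the orthogonal projection onto the range of \<open>A\<close>.\<close>

lemma penrose_factor:
  assumes sA: "mtranspose A = A" and cA: "block_supported d A"
  defines "G \<equiv> pinv_factor d A"
  defines "X \<equiv> matmul d (mtranspose G) (matmul d A G)"
  shows "block_supported d X" "penrose d A X" "mtranspose X = X"
proof -
  have E0: "matmul d (matmul d A A) G = A" and cG: "block_supported d G"
    using pinv_factor[OF sA cA] by (simp_all add: G_def)
  define P where "P = matmul d A G"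
  have E1: "matmul d (mtranspose G) (matmul d A A) = A"
    using arg_cong[OF E0, of mtranspose] by (simp add: mtranspose_matmul sA)
  have E2: "matmul d (mtranspose G) A = P"
  proof -
    have "matmul d (mtranspose G) A = matmul d (matmul d (mtranspose G) (matmul d A A)) G"
      using E0 by (metis matmul_assoc)
    thus ?thesis using E1 P_def by simp
  qed
  have E3: "mtranspose P = P" using E2 by (simp add: P_def mtranspose_matmul sA)
  have E4: "matmul d A P = A" using E0 by (simp add: P_def matmul_assoc)
  have E5: "matmul d P A = A" using E4 E3 sA by (metis mtranspose_matmul)
  have E6: "X = matmul d P G" using E2 by (simp add: X_def P_def matmul_assoc[symmetric])
  have AX: "matmul d A X = P" using E6 E4 by (simp add: matmul_assoc[symmetric] P_def)
  have XA: "matmul d X A = P" using E5 E2 by (simp add: X_def P_def[symmetric] matmul_assoc)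
  have PP: "matmul d P P = P" using E5 by (simp add: P_def matmul_assoc[symmetric])
  show "block_supported d X"
    unfolding X_def by (intro block_supported_matmul block_supported_mtranspose cG cA)
  show "penrose d A X"
    unfolding penrose_def using AX XA E3 E5 E6 PP by (simp add: matmul_assoc[symmetric])
  have "mtranspose X = matmul d (mtranspose P) G"
    unfolding X_def P_def[symmetric] by (simp add: mtranspose_matmul)
  thus "mtranspose X = X" using E3 E6 by simp
qed

lemma pinv_symmetric:
  assumes sym: "\<forall>i<d. \<forall>j<d. T i j = T j i"
  shows "is_pinv d T (pinv d T)" "pinv d T i j = pinv d T j i"
proof -
  let ?A = "mblock d T"
  have sA: "mtranspose ?A = ?A" unfolding mtranspose_def mblock_def using sym by (auto intro!: ext)
  define X where "X = matmul d (mtranspose (pinv_factor d ?A)) (matmul d ?A (pinv_factor d ?A))"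
  note X = penrose_factor[OF sA block_supported_mblock, folded X_def]
  have isX: "is_pinv d T X" using X by (simp add: is_pinv_iff_penrose)
  have "pinv d T = X" unfolding pinv_def
    by (rule the_equality[of "is_pinv d T", OF isX]) (use X penrose_unique in \<open>auto simp: is_pinv_iff_penrose\<close>)
  thus "is_pinv d T (pinv d T)" "pinv d T i j = pinv d T j i"
    using isX X(3) by (auto simp: mtranspose_def dest: fun_cong)
qed

section \<open>Mode products of tensors\<close>

lemma finite_idx: "finite (idx K n)"
proof -
  have "idx K n \<subseteq> {f. \<forall>x. (x \<in> {..<K} \<longrightarrow> f x \<in> {..<(\<Sum>k<K. n k)}) \<and> (x \<notin> {..<K} \<longrightarrow> f x = 0)}"
  proof (intro subsetI CollectI allI conjI impI)
    fix f x assume f: "f \<in> idx K n" and x: "x \<in> {..<K}"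
    have "f x < n x" using f x by (auto simp: idx_def)
    also have "n x \<le> (\<Sum>k<K. n k)" using x by (intro member_le_sum) auto
    finally show "f x \<in> {..<(\<Sum>k<K. n k)}" by simp
  next
    fix f x assume "f \<in> idx K n" "x \<notin> {..<K}" thus "f x = 0" by (auto simp: idx_def)
  qed
  thus ?thesis by (rule finite_subset) (intro finite_set_of_finite_funs; simp)
qed

lemma fun_upd_in_idx: "i \<in> idx K n \<Longrightarrow> k < K \<Longrightarrow> a < n k \<Longrightarrow> i(k := a) \<in> idx K n"
  by (auto simp: idx_def)

lemma idx_fibers_bij:
  assumes k: "k < K"
  shows "bij_betw (\<lambda>(j, a). j(k := a)) (fibers K n k \<times> {..<n k}) (idx K n)"
  unfolding bij_betw_def
proof
  show "inj_on (\<lambda>(j, a). j(k := a)) (fibers K n k \<times> {..<n k})"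
  proof (rule inj_onI, clarify)
    fix j a j' a' assume j: "j \<in> fibers K n k" and j': "j' \<in> fibers K n k"
      and e: "j(k := a) = j'(k := a')"
    have "j m = j' m" for m
      using fun_cong[OF e, of m] j j' by (cases "m = k") (auto simp: fibers_def)
    thus "j = j' \<and> a = a'" using fun_cong[OF e, of k] by auto
  qed
  have "i \<in> (\<lambda>(j, a). j(k := a)) ` (fibers K n k \<times> {..<n k})" if i: "i \<in> idx K n" for i
  proof (rule image_eqI)
    show "i = (\<lambda>(j, a). j(k := a)) (i(k := 0), i k)" by simp
    show "(i(k := 0), i k) \<in> fibers K n k \<times> {..<n k}"
      using i k by (auto simp: fibers_def idx_def)
  qed
  thus "(\<lambda>(j, a). j(k := a)) ` (fibers K n k \<times> {..<n k}) = idx K n"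
    using k by (auto simp: fibers_def intro: fun_upd_in_idx)
qed

lemma sum_idx_fibers:
  assumes "k < K"
  shows "(\<Sum>i\<in>idx K n. f i) = (\<Sum>j\<in>fibers K n k. \<Sum>a<n k. f (j(k := a)))"
  using sum.reindex_bij_betw[OF idx_fibers_bij[OF assms], of f]
  by (simp add: sum.cartesian_product split_def)

text \<open>\<open>mode_mult n k M V\<close> is the mode-\<open>k\<close> product \<open>V \<times>\<^sub>k M\<close>: its mode-\<open>k\<close> unfolding is \<open>M V\<^sub>k\<close>.\<close>

definition mode_mult :: "(nat \<Rightarrow> nat) \<Rightarrow> nat \<Rightarrow> (nat \<Rightarrow> nat \<Rightarrow> real) \<Rightarrow> ((nat \<Rightarrow> nat) \<Rightarrow> real)
    \<Rightarrow> (nat \<Rightarrow> nat) \<Rightarrow> real" where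
  "mode_mult n k M V = (\<lambda>i. \<Sum>b<n k. M (i k) b * V (i(k := b)))"

lemma tinner_mode_mult_fibers:
  assumes "k < K"
  shows "tinner K n U (mode_mult n k M V) =
    (\<Sum>j\<in>fibers K n k. \<Sum>a<n k. \<Sum>b<n k. U (j(k := a)) * M a b * V (j(k := b)))"
  unfolding tinner_def sum_idx_fibers[OF assms]
  by (simp add: mode_mult_def sum_distrib_left mult.assoc)

lemma unfold_qf_eq_tinner:
  assumes "k < K"
  shows "unfold_qf K n k M W = tinner K n W (mode_mult n k M W)"
  unfolding tinner_mode_mult_fibers[OF assms] unfold_qf_def qf_def fiber_def by simp

lemma tinner_commute: "tinner K n U V = tinner K n V U"
  by (simp add: tinner_def mult.commute)

lemma tinner_cong:
  "(\<forall>i\<in>idx K n. U i = U' i) \<Longrightarrow> (\<forall>i\<in>idx K n. V i = V' i) \<Longrightarrow> tinner K n U V = tinner K n U' V'"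
  by (simp add: tinner_def)

lemma tinner_lincomb_left:
  "tinner K n (\<lambda>i. p * U i + q * V i) W = p * tinner K n U W + q * tinner K n V W"
  by (simp add: tinner_def sum.distrib sum_distrib_left algebra_simps)

lemma tinner_lincomb_right:
  "tinner K n W (\<lambda>i. p * U i + q * V i) = p * tinner K n W U + q * tinner K n W V"
  by (simp add: tinner_def sum.distrib sum_distrib_left algebra_simps)

lemma tinner_sum_right: "tinner K n V (\<lambda>i. \<Sum>k<K'. W k i) = (\<Sum>k<K'. tinner K n V (W k))"
  unfolding tinner_def by (simp add: sum_distrib_left sum.swap[of _ "idx K n"])

lemma tinner_mode_mult_sym:
  assumes "k < K" and sym: "\<forall>a<n k. \<forall>b<n k. M a b = M b a"
  shows "tinner K n U (mode_mult n k M V) = tinner K n V (mode_mult n k M U)"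
  unfolding tinner_mode_mult_fibers[OF assms(1)]
proof (rule sum.cong[OF refl])
  fix j
  have "(\<Sum>a<n k. \<Sum>b<n k. U (j(k := a)) * M a b * V (j(k := b)))
      = (\<Sum>b<n k. \<Sum>a<n k. U (j(k := a)) * M a b * V (j(k := b)))" by (rule sum.swap)
  also have "\<dots> = (\<Sum>b<n k. \<Sum>a<n k. V (j(k := b)) * M b a * U (j(k := a)))"
    using sym by (intro sum.cong refl) (simp add: mult.commute mult.left_commute)
  finally show "(\<Sum>a<n k. \<Sum>b<n k. U (j(k := a)) * M a b * V (j(k := b))) =
    (\<Sum>a<n k. \<Sum>b<n k. V (j(k := a)) * M a b * U (j(k := b)))" .
qed

lemma mode_mult_mode_mult: "mode_mult n k M (mode_mult n k N V) = mode_mult n k (matmul (n k) M N) V"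
proof
  fix i
  have "mode_mult n k M (mode_mult n k N V) i = (\<Sum>b<n k. \<Sum>c<n k. M (i k) b * N b c * V (i(k := c)))"
    by (simp add: mode_mult_def sum_distrib_left mult.assoc)
  also have "\<dots> = (\<Sum>c<n k. \<Sum>b<n k. M (i k) b * N b c * V (i(k := c)))" by (rule sum.swap)
  also have "\<dots> = mode_mult n k (matmul (n k) M N) V i"
    by (simp add: mode_mult_def matmul_def sum_distrib_right)
  finally show "mode_mult n k M (mode_mult n k N V) i = mode_mult n k (matmul (n k) M N) V i" .
qed

lemma mode_mult_cong_matrix:
  assumes "i \<in> idx K n" "k < K" "\<forall>a<n k. \<forall>b<n k. M a b = M' a b"
  shows "mode_mult n k M V i = mode_mult n k M' V i"
  using assms by (simp add: mode_mult_def idx_def)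

lemma mode_mult_cong:
  assumes "i \<in> idx K n" "k < K" "\<forall>i\<in>idx K n. V i = V' i"
  shows "mode_mult n k M V i = mode_mult n k M V' i"
  unfolding mode_mult_def using assms fun_upd_in_idx by (auto intro!: sum.cong)

lemma mode_mult_lincomb:
  "mode_mult n k M (\<lambda>i. p * U i + q * V i) = (\<lambda>i. p * mode_mult n k M U i + q * mode_mult n k M V i)"
  by (simp add: mode_mult_def fun_eq_iff sum.distrib sum_distrib_left algebra_simps)

lemma mode_mult_scale: "mode_mult n k M (\<lambda>i. p * U i) = (\<lambda>i. p * mode_mult n k M U i)"
  by (simp add: mode_mult_def fun_eq_iff sum_distrib_left mult.left_commute)

lemma tinner_mode_mult_nonneg:
  assumes "k < K" "spectraplex (n k) \<Theta>"
  shows "0 \<le> tinner K n W (mode_mult n k \<Theta> W)"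
  unfolding unfold_qf_eq_tinner[OF assms(1), symmetric] unfold_qf_def
  using assms(2) by (intro sum_nonneg) (simp add: spectraplex_def)

lemma tnorm2_add_scaled:
  "tnorm2 K n (\<lambda>i. r i + t * d i) = tnorm2 K n r + 2 * t * tinner K n r d + t\<^sup>2 * tnorm2 K n d"
  unfolding tnorm2_def tinner_def
  by (simp add: sum.distrib sum_distrib_left algebra_simps power2_eq_square)

lemma tinner_indicator: "g \<in> idx K n \<Longrightarrow> tinner K n (\<lambda>i. if i = g then 1 else 0) V = V g"
  unfolding tinner_def by (simp add: if_distrib[of "\<lambda>u. u * _"] finite_idx cong: if_cong)

lemma dot_on_product:
  "dot_on ({..<K} \<times> idx K n) y v = (\<Sum>k<K. tinner K n (\<lambda>j. y (k, j)) (\<lambda>j. v (k, j)))"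
  unfolding dot_on_def tinner_def by (simp add: sum.cartesian_product)

lemma mode_mult_indicator_combination:
  assumes "finite A"
  shows "(\<Sum>g\<in>A. \<mu> g * mode_mult n k M (\<lambda>i. if i = g then 1 else 0) j)
    = mode_mult n k M (\<lambda>i. if i \<in> A then \<mu> i else 0) j"
proof -
  have "(\<Sum>g\<in>A. \<mu> g * mode_mult n k M (\<lambda>i. if i = g then 1 else 0) j)
      = (\<Sum>b<n k. \<Sum>g\<in>A. if j(k := b) = g then M (j k) b * \<mu> g else 0)"
    unfolding mode_mult_def sum_distrib_left by (subst sum.swap) (auto intro!: sum.cong)
  also have "\<dots> = mode_mult n k M (\<lambda>i. if i \<in> A then \<mu> i else 0) j"
    unfolding mode_mult_def using assms by (auto simp: sum.delta intro!: sum.cong)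
  finally show ?thesis .
qed

lemma dot_on_mode_mult_indicator:
  assumes sym: "\<forall>k<K. \<forall>a<n k. \<forall>b<n k. \<Theta> k a b = \<Theta> k b a" and g: "g \<in> idx K n"
  shows "dot_on ({..<K} \<times> idx K n) y
      (\<lambda>p. mode_mult n (fst p) (\<Theta> (fst p)) (\<lambda>i. if i = g then 1 else 0) (snd p))
    = (\<Sum>k<K. mode_mult n k (\<Theta> k) (\<lambda>j. y (k, j)) g)"
proof -
  have "dot_on ({..<K} \<times> idx K n) y
      (\<lambda>p. mode_mult n (fst p) (\<Theta> (fst p)) (\<lambda>i. if i = g then 1 else 0) (snd p))
    = (\<Sum>k<K. tinner K n (\<lambda>j. y (k, j)) (mode_mult n k (\<Theta> k) (\<lambda>i. if i = g then 1 else 0)))"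
    unfolding dot_on_product by simp
  also have "\<dots> = (\<Sum>k<K. tinner K n (\<lambda>i. if i = g then 1 else 0) (mode_mult n k (\<Theta> k) (\<lambda>j. y (k, j))))"
    using sym by (intro sum.cong refl tinner_mode_mult_sym[where n=n]) auto
  finally show ?thesis by (simp add: tinner_indicator[OF g])
qed

lemma dot_on_mode_mult:
  assumes sym: "\<forall>k<K. \<forall>a<n k. \<forall>b<n k. \<Theta> k a b = \<Theta> k b a"
  shows "dot_on ({..<K} \<times> idx K n) y (\<lambda>p. mode_mult n (fst p) (\<Theta> (fst p)) (G (fst p)) (snd p))
    = (\<Sum>k<K. tinner K n (mode_mult n k (\<Theta> k) (\<lambda>j. y (k, j))) (G k))"
proof -
  have "dot_on ({..<K} \<times> idx K n) y (\<lambda>p. mode_mult n (fst p) (\<Theta> (fst p)) (G (fst p)) (snd p))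
    = (\<Sum>k<K. tinner K n (\<lambda>j. y (k, j)) (mode_mult n k (\<Theta> k) (G k)))"
    unfolding dot_on_product by simp
  also have "\<dots> = (\<Sum>k<K. tinner K n (G k) (mode_mult n k (\<Theta> k) (\<lambda>j. y (k, j))))"
    using sym by (intro sum.cong refl tinner_mode_mult_sym[where n=n]) auto
  finally show ?thesis by (simp add: tinner_commute)
qed

lemma mode_mult_tendsto:
  assumes k: "k < K" and i: "i \<in> idx K n"
    and lim: "\<forall>i\<in>idx K n. (\<lambda>j. U j i) \<longlonglongrightarrow> U' i"
  shows "(\<lambda>j. mode_mult n k M (U j) i) \<longlonglongrightarrow> mode_mult n k M U' i"
  unfolding mode_mult_def
proof (intro tendsto_sum tendsto_mult_left)
  fix b assume "b \<in> {..<n k}"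
  hence "i(k := b) \<in> idx K n" using i k fun_upd_in_idx by auto
  thus "(\<lambda>j. U j (i(k := b))) \<longlonglongrightarrow> U' (i(k := b))" using lim by blast
qed

lemma tinner_tendsto:
  assumes "\<forall>i\<in>idx K n. (\<lambda>j. U j i) \<longlonglongrightarrow> U' i" "\<forall>i\<in>idx K n. (\<lambda>j. V j i) \<longlonglongrightarrow> V' i"
  shows "(\<lambda>j. tinner K n (U j) (V j)) \<longlonglongrightarrow> tinner K n U' V'"
  unfolding tinner_def using assms by (intro tendsto_sum tendsto_mult) auto

section \<open>Matrices in the spectraplex\<close>

lemma quadratic_nonneg_discriminant:
  fixes q u c :: real
  assumes h: "\<And>t. 0 \<le> q - 2 * t * u + t\<^sup>2 * c" and c: "0 \<le> c"
  shows "u\<^sup>2 \<le> c * q"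
proof (cases "c > 0")
  case True
  have "0 \<le> q - 2 * (u / c) * u + (u / c)\<^sup>2 * c" by (rule h)
  also have "\<dots> = q - u\<^sup>2 / c" using True by (simp add: field_simps power2_eq_square)
  finally show ?thesis using True by (simp add: field_simps)
next
  case False
  hence c0: "c = 0" using c by simp
  show ?thesis
  proof (cases "u = 0")
    case False
    have "0 \<le> q - 2 * ((q + 1) / (2 * u)) * u + ((q + 1) / (2 * u))\<^sup>2 * c" by (rule h)
    also have "\<dots> = -1" using False c0 by (simp add: field_simps)
    finally show ?thesis by simp
  qed (use c0 in simp)
qed

lemma qf_diff_scaled:
  "qf d M (\<lambda>b. x b - t * e b) = qf d M x - t * (\<Sum>a<d. \<Sum>b<d. e a * M a b * x b)
     - t * (\<Sum>a<d. \<Sum>b<d. x a * M a b * e b) + t\<^sup>2 * qf d M e"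
proof -
  have "(x a - t * e a) * M a b * (x b - t * e b) =
     x a * M a b * x b - t * (e a * M a b * x b) - t * (x a * M a b * e b) + t\<^sup>2 * (e a * M a b * e b)"
    for a b by (simp add: algebra_simps power2_eq_square)
  thus ?thesis unfolding qf_def by (simp add: sum.distrib sum_subtractf sum_distrib_left)
qed

text \<open>Cauchy-Schwarz for the semi-inner product \<open>\<langle>u, \<Theta> v\<rangle>\<close>, applied to \<open>x\<close> and the unit vector \<open>e\<^sub>a\<close>.\<close>

lemma spectraplex_row_bound:
  assumes sp: "spectraplex d \<Theta>" and a: "a < d"
  shows "(\<Sum>b<d. \<Theta> a b * x b)\<^sup>2 \<le> \<Theta> a a * qf d \<Theta> x"
proof -
  define e where "e = (\<lambda>b::nat. if b = a then 1 else (0::real))"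
  have sym: "\<forall>i<d. \<forall>j<d. \<Theta> i j = \<Theta> j i" using sp by (simp add: spectraplex_def)
  have sum_e: "(\<Sum>a'<d. e a' * f a') = f a" for f :: "nat \<Rightarrow> real"
    using a by (simp add: e_def if_distrib[of "\<lambda>u. u * _"] sum.delta cong: if_cong)
  have e1: "(\<Sum>a'<d. \<Sum>b<d. e a' * \<Theta> a' b * x b) = (\<Sum>b<d. \<Theta> a b * x b)"
    using sum_e[of "\<lambda>a'. \<Sum>b<d. \<Theta> a' b * x b"] by (simp add: sum_distrib_left mult.assoc)
  have e2: "(\<Sum>a'<d. \<Sum>b<d. x a' * \<Theta> a' b * e b) = (\<Sum>b<d. \<Theta> a b * x b)"
  proof -
    have "(\<Sum>a'<d. \<Sum>b<d. x a' * \<Theta> a' b * e b) = (\<Sum>a'<d. x a' * \<Theta> a' a)"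
      using sum_e[of "\<lambda>b. x _ * \<Theta> _ b"] by (simp add: mult.commute)
    also have "\<dots> = (\<Sum>b<d. \<Theta> a b * x b)" using sym a by (intro sum.cong refl) (auto simp: mult.commute)
    finally show ?thesis .
  qed
  have "qf d \<Theta> e = (\<Sum>a'<d. e a' * (\<Sum>b<d. e b * \<Theta> a' b))"
    unfolding qf_def by (simp add: sum_distrib_left mult_ac)
  hence e3: "qf d \<Theta> e = \<Theta> a a" by (simp add: sum_e)
  have "0 \<le> \<Theta> a a" using sp e3 by (metis spectraplex_def)
  thus ?thesis
  proof (rule quadratic_nonneg_discriminant[rotated])
    fix t
    have "0 \<le> qf d \<Theta> (\<lambda>b. x b - t * e b)" using sp by (simp add: spectraplex_def)
    thus "0 \<le> qf d \<Theta> x - 2 * t * (\<Sum>b<d. \<Theta> a b * x b) + t\<^sup>2 * \<Theta> a a"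
      unfolding qf_diff_scaled e1 e2 e3 by simp
  qed
qed

text \<open>Summing the row bounds uses \<open>tr \<Theta> = 1\<close>: all eigenvalues of \<open>\<Theta>\<close> lie in \<open>[0, 1]\<close>, so \<open>\<Theta>\<^sup>2 \<preceq> \<Theta>\<close>.\<close>

lemma spectraplex_norm_le_qf:
  assumes sp: "spectraplex d \<Theta>"
  shows "(\<Sum>a<d. (\<Sum>b<d. \<Theta> a b * x b)\<^sup>2) \<le> qf d \<Theta> x"
proof -
  have "(\<Sum>a<d. (\<Sum>b<d. \<Theta> a b * x b)\<^sup>2) \<le> (\<Sum>a<d. \<Theta> a a * qf d \<Theta> x)"
    using spectraplex_row_bound[OF sp] by (intro sum_mono) auto
  also have "\<dots> = qf d \<Theta> x" using sp by (simp add: spectraplex_def sum_distrib_right[symmetric])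
  finally show ?thesis .
qed

lemma tinner_mode_mult_le:
  assumes k: "k < K" and sp: "spectraplex (n k) \<Theta>"
  shows "tinner K n (mode_mult n k \<Theta> x) (mode_mult n k \<Theta> x) \<le> tinner K n x (mode_mult n k \<Theta> x)"
proof -
  have "tinner K n (mode_mult n k \<Theta> x) (mode_mult n k \<Theta> x)
      = (\<Sum>j\<in>fibers K n k. \<Sum>a<n k. (\<Sum>b<n k. \<Theta> a b * x (j(k := b)))\<^sup>2)"
    unfolding tinner_def sum_idx_fibers[OF k] by (simp add: mode_mult_def power2_eq_square)
  also have "\<dots> \<le> (\<Sum>j\<in>fibers K n k. qf (n k) \<Theta> (fiber k x j))"
    by (intro sum_mono) (use spectraplex_norm_le_qf[OF sp] in \<open>simp add: fiber_def\<close>)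
  also have "\<dots> = tinner K n x (mode_mult n k \<Theta> x)"
    using unfold_qf_eq_tinner[OF k] by (simp add: unfold_qf_def)
  finally show ?thesis .
qed

lemma spectraplex_pinv:
  assumes "spectraplex d \<Theta>"
  shows "\<forall>a<d. \<forall>b<d. matmul d (matmul d \<Theta> (pinv d \<Theta>)) \<Theta> a b = \<Theta> a b"
    "pinv d \<Theta> a b = pinv d \<Theta> b a"
  using pinv_symmetric[of d \<Theta>] assms by (simp_all add: spectraplex_def is_pinv_def)

lemma mode_mult_pinv_mode_mult:
  assumes k: "k < K" and sp: "spectraplex (n k) \<Theta>" and i: "i \<in> idx K n"
  shows "mode_mult n k \<Theta> (mode_mult n k (pinv (n k) \<Theta>) (mode_mult n k \<Theta> x)) i = mode_mult n k \<Theta> x i"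
  unfolding mode_mult_mode_mult using spectraplex_pinv(1)[OF sp]
  by (intro mode_mult_cong_matrix[OF i k]) (simp add: matmul_assoc)

section \<open>The range condition and the pseudo-inverse penalty\<close>

lemma fibers_in_range_iff:
  assumes k: "k < K"
  shows "(\<forall>j\<in>fibers K n k. in_range (n k) \<Theta> (fiber k W j))
     \<longleftrightarrow> (\<exists>x. \<forall>i\<in>idx K n. W i = mode_mult n k \<Theta> x i)"
proof
  assume "\<forall>j\<in>fibers K n k. in_range (n k) \<Theta> (fiber k W j)"
  then obtain xf where xf: "\<forall>j\<in>fibers K n k. \<forall>a<n k. (\<Sum>b<n k. \<Theta> a b * xf j b) = W (j(k := a))"
    unfolding in_range_def fiber_def by metis
  define x where "x = (\<lambda>i. xf (i(k := 0)) (i k))"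
  have "W i = mode_mult n k \<Theta> x i" if i: "i \<in> idx K n" for i
  proof -
    have ik: "i k < n k" using i k by (auto simp: idx_def)
    have "i(k := 0) \<in> fibers K n k" using i k ik by (auto simp: fibers_def intro!: fun_upd_in_idx)
    hence "(\<Sum>b<n k. \<Theta> (i k) b * xf (i(k := 0)) b) = W ((i(k := 0))(k := i k))"
      using xf ik by blast
    thus ?thesis by (simp add: mode_mult_def x_def)
  qed
  thus "\<exists>x. \<forall>i\<in>idx K n. W i = mode_mult n k \<Theta> x i" by blast
next
  assume "\<exists>x. \<forall>i\<in>idx K n. W i = mode_mult n k \<Theta> x i"
  then obtain x where x: "\<forall>i\<in>idx K n. W i = mode_mult n k \<Theta> x i" by blast
  have "in_range (n k) \<Theta> (fiber k W j)" if j: "j \<in> fibers K n k" for j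
  proof -
    have "j(k := a) \<in> idx K n" if "a < n k" for a
      using j k that fun_upd_in_idx by (auto simp: fibers_def)
    hence "\<forall>a<n k. (\<Sum>b<n k. \<Theta> a b * x (j(k := b))) = fiber k W j a"
      using x by (simp add: fiber_def mode_mult_def)
    thus ?thesis unfolding in_range_def by (intro exI[of _ "\<lambda>b. x (j(k := b))"])
  qed
  thus "\<forall>j\<in>fibers K n k. in_range (n k) \<Theta> (fiber k W j)" by blast
qed

text \<open>The range condition of \<open>pinv_term\<close> is expressed by the fixed-point equation
  \<open>\<Theta> \<Theta>\<^sup>\<dagger> W\<^sub>k = W\<^sub>k\<close>, which, unlike \<open>\<exists>X. W\<^sub>k = \<Theta> X\<close>, is visibly closed under limits.\<close>

definition in_mode_range :: "nat \<Rightarrow> (nat \<Rightarrow> nat) \<Rightarrow> nat \<Rightarrow> (nat \<Rightarrow> nat \<Rightarrow> real)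
    \<Rightarrow> ((nat \<Rightarrow> nat) \<Rightarrow> real) \<Rightarrow> bool" where
  "in_mode_range K n k \<Theta> W \<longleftrightarrow>
     (\<forall>i\<in>idx K n. mode_mult n k \<Theta> (mode_mult n k (pinv (n k) \<Theta>) W) i = W i)"

lemma in_mode_range_iff:
  assumes k: "k < K" and sp: "spectraplex (n k) \<Theta>"
  shows "in_mode_range K n k \<Theta> W \<longleftrightarrow> (\<exists>x. \<forall>i\<in>idx K n. W i = mode_mult n k \<Theta> x i)"
proof
  assume "in_mode_range K n k \<Theta> W"
  thus "\<exists>x. \<forall>i\<in>idx K n. W i = mode_mult n k \<Theta> x i" unfolding in_mode_range_def by metis
next
  assume "\<exists>x. \<forall>i\<in>idx K n. W i = mode_mult n k \<Theta> x i"
  then obtain x where x: "\<forall>i\<in>idx K n. W i = mode_mult n k \<Theta> x i" by blast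
  have "mode_mult n k \<Theta> (mode_mult n k (pinv (n k) \<Theta>) W) i = W i" if i: "i \<in> idx K n" for i
  proof -
    have "\<forall>j\<in>idx K n. mode_mult n k (pinv (n k) \<Theta>) W j
        = mode_mult n k (pinv (n k) \<Theta>) (mode_mult n k \<Theta> x) j"
      using mode_mult_cong[OF _ k] x by blast
    hence "mode_mult n k \<Theta> (mode_mult n k (pinv (n k) \<Theta>) W) i
        = mode_mult n k \<Theta> (mode_mult n k (pinv (n k) \<Theta>) (mode_mult n k \<Theta> x)) i"
      by (rule mode_mult_cong[OF i k])
    thus ?thesis using mode_mult_pinv_mode_mult[OF k sp i] x i by simp
  qed
  thus "in_mode_range K n k \<Theta> W" unfolding in_mode_range_def by blast
qed

lemma pinv_term_eq:
  assumes k: "k < K" and sp: "spectraplex (n k) \<Theta>"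
  shows "pinv_term K n k \<Theta> W = (if in_mode_range K n k \<Theta> W
     then ereal (tinner K n W (mode_mult n k (pinv (n k) \<Theta>) W)) else \<infinity>)"
  unfolding pinv_term_def in_mode_range_iff[where n=n, OF k sp] fibers_in_range_iff[OF k] unfold_qf_eq_tinner[OF k] ..

lemma tinner_pinv_in_mode_range:
  assumes R: "in_mode_range K n k \<Theta> W"
  defines "X \<equiv> mode_mult n k (pinv (n k) \<Theta>) W"
  shows "tinner K n W X = tinner K n X (mode_mult n k \<Theta> X)"
    "tinner K n V W = tinner K n V (mode_mult n k \<Theta> X)"
proof -
  have W: "\<forall>i\<in>idx K n. W i = mode_mult n k \<Theta> X i" using R by (simp add: in_mode_range_def X_def)
  show "tinner K n V W = tinner K n V (mode_mult n k \<Theta> X)" by (rule tinner_cong) (use W in auto)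
  have "tinner K n W X = tinner K n (mode_mult n k \<Theta> X) X" by (rule tinner_cong) (use W in auto)
  thus "tinner K n W X = tinner K n X (mode_mult n k \<Theta> X)" by (simp add: tinner_commute)
qed

lemma pinv_quadratic_bounds:
  assumes k: "k < K" and sp: "spectraplex (n k) \<Theta>" and R: "in_mode_range K n k \<Theta> W"
  shows "0 \<le> tinner K n W (mode_mult n k (pinv (n k) \<Theta>) W)"
    "tnorm2 K n W \<le> tinner K n W (mode_mult n k (pinv (n k) \<Theta>) W)"
proof -
  define X where "X = mode_mult n k (pinv (n k) \<Theta>) W"
  note eq = tinner_pinv_in_mode_range[OF R, folded X_def]
  show "0 \<le> tinner K n W (mode_mult n k (pinv (n k) \<Theta>) W)"
    unfolding X_def[symmetric] eq(1) by (rule tinner_mode_mult_nonneg[where n=n, OF k sp])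
  have "tnorm2 K n W = tinner K n (mode_mult n k \<Theta> X) W"
    unfolding tnorm2_def eq(2)[of W] by (rule tinner_commute)
  also have "\<dots> = tinner K n (mode_mult n k \<Theta> X) (mode_mult n k \<Theta> X)" by (rule eq(2))
  also have "\<dots> \<le> tinner K n X (mode_mult n k \<Theta> X)" by (rule tinner_mode_mult_le[where n=n, OF k sp])
  finally show "tnorm2 K n W \<le> tinner K n W (mode_mult n k (pinv (n k) \<Theta>) W)"
    unfolding X_def[symmetric] eq(1) .
qed

text \<open>Young's inequality, from \<open>0 \<le> \<langle>\<lambda> V - X, \<Theta> (\<lambda> V - X)\<rangle>\<close> with \<open>X = \<Theta>\<^sup>\<dagger> W\<^sub>k\<close>.\<close>

lemma tinner_le_pinv_quadratic:
  assumes k: "k < K" and sp: "spectraplex (n k) \<Theta>" and R: "in_mode_range K n k \<Theta> W"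
    and lam: "lam > 0"
  shows "tinner K n V W \<le> 1 / (2 * lam) * tinner K n W (mode_mult n k (pinv (n k) \<Theta>) W)
           + lam / 2 * tinner K n V (mode_mult n k \<Theta> V)"
proof -
  define X where "X = mode_mult n k (pinv (n k) \<Theta>) W"
  note eq = tinner_pinv_in_mode_range[OF R, folded X_def]
  have sym: "\<forall>a<n k. \<forall>b<n k. \<Theta> a b = \<Theta> b a" using sp by (simp add: spectraplex_def)
  define A where "A = tinner K n V (mode_mult n k \<Theta> V)"
  define B where "B = tinner K n V (mode_mult n k \<Theta> X)"
  define Q where "Q = tinner K n X (mode_mult n k \<Theta> X)"
  have "0 \<le> tinner K n (\<lambda>i. lam * V i + (-1) * X i) (mode_mult n k \<Theta> (\<lambda>i. lam * V i + (-1) * X i))"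
    by (rule tinner_mode_mult_nonneg[where n=n, OF k sp])
  also have "\<dots> = lam * lam * A - lam * B - lam * tinner K n X (mode_mult n k \<Theta> V) + Q"
    unfolding mode_mult_lincomb tinner_lincomb_left tinner_lincomb_right A_def B_def Q_def
    by (simp add: algebra_simps)
  also have "tinner K n X (mode_mult n k \<Theta> V) = B"
    unfolding B_def by (rule tinner_mode_mult_sym[where n=n, OF k sym])
  finally have "2 * lam * B \<le> lam * lam * A + Q" by (simp add: algebra_simps)
  hence "B \<le> lam / 2 * A + Q / (2 * lam)" using lam by (simp add: field_simps)
  thus ?thesis using eq unfolding A_def B_def Q_def X_def by simp
qed

lemma penalty_eq_at_range_point:
  assumes k: "k < K" and sp: "spectraplex (n k) \<Theta>"
    and W: "\<forall>i\<in>idx K n. W i = lam * mode_mult n k \<Theta> V i"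
  shows "tinner K n W (mode_mult n k (pinv (n k) \<Theta>) W) = lam\<^sup>2 * tinner K n V (mode_mult n k \<Theta> V)"
proof -
  let ?P = "pinv (n k) \<Theta>"
  have sym: "\<forall>a<n k. \<forall>b<n k. \<Theta> a b = \<Theta> b a" using sp by (simp add: spectraplex_def)
  have PW: "\<forall>i\<in>idx K n. mode_mult n k ?P W i = lam * mode_mult n k ?P (mode_mult n k \<Theta> V) i"
    using mode_mult_cong[OF _ k W] by (simp add: mode_mult_scale)
  have "tinner K n W (mode_mult n k ?P W)
      = lam\<^sup>2 * tinner K n (mode_mult n k \<Theta> V) (mode_mult n k ?P (mode_mult n k \<Theta> V))"
    using tinner_cong[OF W PW] by (simp add: tinner_def sum_distrib_left power2_eq_square algebra_simps)
  also have "tinner K n (mode_mult n k \<Theta> V) (mode_mult n k ?P (mode_mult n k \<Theta> V))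
      = tinner K n V (mode_mult n k \<Theta> (mode_mult n k ?P (mode_mult n k \<Theta> V)))"
    by (subst tinner_commute) (rule tinner_mode_mult_sym[where n=n, OF k sym])
  also have "\<dots> = tinner K n V (mode_mult n k \<Theta> V)"
    by (rule tinner_cong) (use mode_mult_pinv_mode_mult[where n=n, OF k sp] in auto)
  finally show ?thesis .
qed

section \<open>The primal objective\<close>

lemma completing_square:
  fixes C :: real and \<Omega> :: "(nat \<Rightarrow> nat) set" and W Y Z :: "(nat \<Rightarrow> nat) \<Rightarrow> real"
  assumes C: "C > 0"
  defines "R \<equiv> (\<lambda>i. restr \<Omega> W i - restr \<Omega> Y i)"
  shows "C * tnorm2 K n R + 1 / (4 * C) * tnorm2 K n Z - tinner K n Z (restr \<Omega> Y)
           + tinner K n Z (restr \<Omega> W) = (\<Sum>i\<in>idx K n. (2 * C * R i + Z i)\<^sup>2 / (4 * C))"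
  unfolding tnorm2_def tinner_def using C
  by (simp add: R_def sum_distrib_left sum_divide_distrib sum.distrib[symmetric] sum_subtractf[symmetric]
      power2_eq_square field_simps)

definition residual :: "nat \<Rightarrow> (nat \<Rightarrow> nat) set \<Rightarrow> ((nat \<Rightarrow> nat) \<Rightarrow> real)
    \<Rightarrow> (nat \<Rightarrow> (nat \<Rightarrow> nat) \<Rightarrow> real) \<Rightarrow> (nat \<Rightarrow> nat) \<Rightarrow> real" where
  "residual K \<Omega> Y Wf = (\<lambda>i. restr \<Omega> (\<lambda>i. \<Sum>k<K. Wf k i) i - restr \<Omega> Y i)"

definition primal_value :: "nat \<Rightarrow> (nat \<Rightarrow> nat) \<Rightarrow> (nat \<Rightarrow> nat) set \<Rightarrow> ((nat \<Rightarrow> nat) \<Rightarrow> real) \<Rightarrow> real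
    \<Rightarrow> (nat \<Rightarrow> real) \<Rightarrow> (nat \<Rightarrow> nat \<Rightarrow> nat \<Rightarrow> real) \<Rightarrow> (nat \<Rightarrow> (nat \<Rightarrow> nat) \<Rightarrow> real) \<Rightarrow> real" where
  "primal_value K n \<Omega> Y C lam \<Theta> Wf = C * tnorm2 K n (residual K \<Omega> Y Wf)
     + (\<Sum>k<K. 1 / (2 * lam k) * tinner K n (Wf k) (mode_mult n k (pinv (n k) (\<Theta> k)) (Wf k)))"

definition primal_gradient :: "nat \<Rightarrow> (nat \<Rightarrow> nat) \<Rightarrow> (nat \<Rightarrow> nat) set \<Rightarrow> ((nat \<Rightarrow> nat) \<Rightarrow> real) \<Rightarrow> real
    \<Rightarrow> (nat \<Rightarrow> real) \<Rightarrow> (nat \<Rightarrow> nat \<Rightarrow> nat \<Rightarrow> real) \<Rightarrow> (nat \<Rightarrow> (nat \<Rightarrow> nat) \<Rightarrow> real)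
    \<Rightarrow> nat \<Rightarrow> (nat \<Rightarrow> nat) \<Rightarrow> real" where
  "primal_gradient K n \<Omega> Y C lam \<Theta> Wf k =
     (\<lambda>i. 2 * C * residual K \<Omega> Y Wf i + 1 / lam k * mode_mult n k (pinv (n k) (\<Theta> k)) (Wf k) i)"

definition primal_feasible :: "nat \<Rightarrow> (nat \<Rightarrow> nat) \<Rightarrow> (nat \<Rightarrow> nat \<Rightarrow> nat \<Rightarrow> real)
    \<Rightarrow> (nat \<Rightarrow> (nat \<Rightarrow> nat) \<Rightarrow> real) set" where
  "primal_feasible K n \<Theta> =
     {Wf. (\<forall>k<K. in_mode_range K n k (\<Theta> k) (Wf k)) \<and> (\<forall>i\<in>idx K n. 0 \<le> (\<Sum>k<K. Wf k i))}"

lemma primal_obj_eq: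
  assumes sp: "\<forall>k<K. spectraplex (n k) (\<Theta> k)" and lam: "\<forall>k<K. lam k > 0"
  shows "primal_obj K n \<Omega> Y C lam \<Theta> Wf =
    (if \<forall>k<K. in_mode_range K n k (\<Theta> k) (Wf k)
     then ereal (primal_value K n \<Omega> Y C lam \<Theta> Wf) else \<infinity>)"
proof (cases "\<forall>k<K. in_mode_range K n k (\<Theta> k) (Wf k)")
  case True
  have "(\<Sum>k<K. ereal (1 / (2 * lam k)) * pinv_term K n k (\<Theta> k) (Wf k))
      = (\<Sum>k<K. ereal (1 / (2 * lam k) * tinner K n (Wf k) (mode_mult n k (pinv (n k) (\<Theta> k)) (Wf k))))"
    using True sp by (intro sum.cong refl) (simp add: pinv_term_eq)
  thus ?thesis using True by (simp add: primal_obj_def primal_value_def residual_def Let_def)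
next
  case False
  then obtain k where k: "k < K" "\<not> in_mode_range K n k (\<Theta> k) (Wf k)" by blast
  moreover have "lam k > 0" using lam k by simp
  ultimately have "ereal (1 / (2 * lam k)) * pinv_term K n k (\<Theta> k) (Wf k) = \<infinity>"
    using sp by (simp add: pinv_term_eq)
  hence "(\<Sum>k<K. ereal (1 / (2 * lam k)) * pinv_term K n k (\<Theta> k) (Wf k)) = \<infinity>"
    using k by (subst sum_Pinfty) auto
  thus ?thesis using False by (simp add: primal_obj_def Let_def)
qed

lemma primal_feasible_closed:
  assumes Ws: "\<And>j. Ws j \<in> primal_feasible K n \<Theta>"
    and lim: "\<And>k. k < K \<Longrightarrow> \<forall>i\<in>idx K n. (\<lambda>j. Ws j k i) \<longlonglongrightarrow> W k i"
  shows "W \<in> primal_feasible K n \<Theta>"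
  unfolding primal_feasible_def
proof (intro CollectI conjI allI impI ballI)
  fix k assume k: "k < K"
  show "in_mode_range K n k (\<Theta> k) (W k)" unfolding in_mode_range_def
  proof
    fix i assume i: "i \<in> idx K n"
    have "(\<lambda>j. mode_mult n k (\<Theta> k) (mode_mult n k (pinv (n k) (\<Theta> k)) (Ws j k)) i)
        \<longlonglongrightarrow> mode_mult n k (\<Theta> k) (mode_mult n k (pinv (n k) (\<Theta> k)) (W k)) i"
      using mode_mult_tendsto[OF k _ lim[OF k]] by (intro mode_mult_tendsto[OF k i]) blast
    moreover have "(\<lambda>j. mode_mult n k (\<Theta> k) (mode_mult n k (pinv (n k) (\<Theta> k)) (Ws j k)) i)
        = (\<lambda>j. Ws j k i)"
      using Ws i k by (auto simp: primal_feasible_def in_mode_range_def)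
    ultimately show "mode_mult n k (\<Theta> k) (mode_mult n k (pinv (n k) (\<Theta> k)) (W k)) i = W k i"
      using lim[OF k] i LIMSEQ_unique by fastforce
  qed
next
  fix i assume i: "i \<in> idx K n"
  have "(\<lambda>j. \<Sum>k<K. Ws j k i) \<longlonglongrightarrow> (\<Sum>k<K. W k i)"
    using lim i by (intro tendsto_sum) auto
  moreover have "\<forall>j. 0 \<le> (\<Sum>k<K. Ws j k i)" using Ws i by (auto simp: primal_feasible_def)
  ultimately show "0 \<le> (\<Sum>k<K. W k i)" by (intro LIMSEQ_le_const) auto
qed

lemma primal_value_tendsto:
  assumes lim: "\<And>k. k < K \<Longrightarrow> \<forall>i\<in>idx K n. (\<lambda>j. Ws j k i) \<longlonglongrightarrow> W k i"
  shows "(\<lambda>j. primal_value K n \<Omega> Y C lam \<Theta> (Ws j)) \<longlonglongrightarrow> primal_value K n \<Omega> Y C lam \<Theta> W"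
proof -
  have res: "\<forall>i\<in>idx K n. (\<lambda>j. residual K \<Omega> Y (Ws j) i) \<longlonglongrightarrow> residual K \<Omega> Y W i"
    using lim unfolding residual_def restr_def by (auto intro!: tendsto_intros)
  have pen: "(\<lambda>j. tinner K n (Ws j k) (mode_mult n k (pinv (n k) (\<Theta> k)) (Ws j k)))
      \<longlonglongrightarrow> tinner K n (W k) (mode_mult n k (pinv (n k) (\<Theta> k)) (W k))" if k: "k < K" for k
    using lim[OF k] mode_mult_tendsto[OF k _ lim[OF k]] by (intro tinner_tendsto) auto
  show ?thesis unfolding primal_value_def tnorm2_def
    by (intro tendsto_add tendsto_mult_left tendsto_sum tinner_tendsto res pen) auto
qed

lemma bounded_coordinates_convergent_subseq:
  fixes x :: "nat \<Rightarrow> 'i \<Rightarrow> real"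
  assumes "finite I" and bnd: "\<And>j p. p \<in> I \<Longrightarrow> \<bar>x j p\<bar> \<le> B p"
  shows "\<exists>r L. strict_mono r \<and> (\<forall>p\<in>I. (\<lambda>j. x (r j) p) \<longlonglongrightarrow> L p)"
  using assms(1) bnd
proof (induction I rule: finite_induct)
  case empty
  show ?case by (intro exI[of _ id]) (simp add: strict_mono_def)
next
  case (insert q I)
  from insert.IH insert.prems obtain r L where r: "strict_mono r"
    and L: "\<forall>p\<in>I. (\<lambda>j. x (r j) p) \<longlonglongrightarrow> L p" by blast
  obtain f where f: "strict_mono f" and mono: "monoseq (\<lambda>j. x (r (f j)) q)"
    using seq_monosub[of "\<lambda>j. x (r j) q"] by blast
  have "Bseq (\<lambda>j. x (r (f j)) q)" using insert.prems by (intro BseqI'[of _ "B q"]) auto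
  then obtain l where l: "(\<lambda>j. x (r (f j)) q) \<longlonglongrightarrow> l"
    using Bseq_monoseq_convergent[OF _ mono] by (auto simp: convergent_def)
  have "(\<lambda>j. x ((r \<circ> f) j) p) \<longlonglongrightarrow> (L(q := l)) p" if p: "p \<in> insert q I" for p
  proof (cases "p = q")
    case False
    hence "((\<lambda>j. x (r j) p) \<circ> f) \<longlonglongrightarrow> L p" using L p f by (intro LIMSEQ_subseq_LIMSEQ) auto
    thus ?thesis using False by (simp add: comp_def)
  qed (use l in simp)
  thus ?case using strict_mono_o[OF r f] by blast
qed

lemma abs_le_one_plus_square: "\<bar>x :: real\<bar> \<le> 1 + x\<^sup>2"
proof (cases "\<bar>x\<bar> \<le> 1")
  case False
  hence "\<bar>x\<bar> * 1 \<le> \<bar>x\<bar> * \<bar>x\<bar>" by (intro mult_left_mono) auto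
  thus ?thesis by (simp add: abs_mult_self_eq power2_eq_square)
qed (simp add: add_increasing2)

lemma eventually_at_right_nonneg_add_scaled:
  fixes a b :: real
  assumes "0 \<le> a" and "a = 0 \<Longrightarrow> 0 \<le> b"
  shows "\<forall>\<^sub>F t in at_right 0. 0 \<le> a + t * b"
proof (cases "a = 0")
  case True
  thus ?thesis using assms(2) eventually_at_right_less[of "0::real"] by (auto elim!: eventually_mono)
next
  case False
  have "((\<lambda>t. a + t * b) \<longlongrightarrow> a + 0 * b) (at_right 0)" by (intro tendsto_intros)
  hence "\<forall>\<^sub>F t in at_right 0. 0 < a + t * b" using False assms(1) by (intro order_tendstoD(1)) auto
  thus ?thesis by (auto elim!: eventually_mono)
qed

section \<open>Strong duality for fixed \<open>\<Theta>\<close>\<close>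

context
  fixes K :: nat and n :: "nat \<Rightarrow> nat" and \<Omega> :: "(nat \<Rightarrow> nat) set"
    and Y :: "(nat \<Rightarrow> nat) \<Rightarrow> real" and C :: real and lam :: "nat \<Rightarrow> real"
    and \<Theta> :: "nat \<Rightarrow> nat \<Rightarrow> nat \<Rightarrow> real"
  assumes sp: "\<forall>k<K. spectraplex (n k) (\<Theta> k)" and lam: "\<forall>k<K. lam k > 0" and C: "C > 0"
begin

abbreviation (input) F :: "(nat \<Rightarrow> (nat \<Rightarrow> nat) \<Rightarrow> real) \<Rightarrow> real" where
  "F \<equiv> primal_value K n \<Omega> Y C lam \<Theta>"

lemma dual_obj_le_primal_value:
  assumes W: "Wf \<in> primal_feasible K n \<Theta>"
    and Z: "\<forall>i\<in>idx K n. Z i = restr \<Omega> Z i" and S: "\<forall>i\<in>idx K n. 0 \<le> S i"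
  shows "dual_obj K n \<Omega> Y C lam \<Theta> Z S \<le> F Wf"
proof -
  define V where "V = (\<lambda>i. Z i + S i)"
  define SW where "SW = (\<lambda>i. \<Sum>k<K. Wf k i)"
  define P where "P = (\<Sum>k<K. 1 / (2 * lam k) * tinner K n (Wf k) (mode_mult n k (pinv (n k) (\<Theta> k)) (Wf k)))"
  define D where "D = (\<Sum>k<K. lam k / 2 * tinner K n V (mode_mult n k (\<Theta> k) V))"
  have "tinner K n V SW = (\<Sum>k<K. tinner K n V (Wf k))"
    unfolding SW_def tinner_sum_right ..
  also have "\<dots> \<le> (\<Sum>k<K. 1 / (2 * lam k) * tinner K n (Wf k) (mode_mult n k (pinv (n k) (\<Theta> k)) (Wf k))
               + lam k / 2 * tinner K n V (mode_mult n k (\<Theta> k) V))"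
    using tinner_le_pinv_quadratic[where n=n] sp W lam
    by (intro sum_mono) (auto simp: primal_feasible_def)
  finally have young: "tinner K n V SW \<le> P + D" by (simp add: P_def D_def sum.distrib)
  have "tinner K n Z (restr \<Omega> SW) = tinner K n Z SW"
    unfolding tinner_def using Z by (intro sum.cong refl) (auto simp: restr_def)
  also have "\<dots> \<le> tinner K n Z SW + tinner K n S SW"
    using S W unfolding tinner_def SW_def by (simp add: sum_nonneg primal_feasible_def)
  also have "\<dots> = tinner K n V SW" by (simp add: tinner_def V_def sum.distrib algebra_simps)
  finally have slack: "tinner K n Z (restr \<Omega> SW) \<le> tinner K n V SW" .
  have "0 \<le> (\<Sum>i\<in>idx K n. (2 * C * (restr \<Omega> SW i - restr \<Omega> Y i) + Z i)\<^sup>2 / (4 * C))"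
    using C by (intro sum_nonneg) simp
  hence "tinner K n Z (restr \<Omega> Y) - 1 / (4 * C) * tnorm2 K n Z
      \<le> C * tnorm2 K n (\<lambda>i. restr \<Omega> SW i - restr \<Omega> Y i) + tinner K n Z (restr \<Omega> SW)"
    unfolding completing_square[OF C, symmetric] by simp
  moreover have "dual_obj K n \<Omega> Y C lam \<Theta> Z S = tinner K n Z (restr \<Omega> Y) - 1 / (4 * C) * tnorm2 K n Z - D"
    unfolding dual_obj_def D_def V_def by (simp add: unfold_qf_eq_tinner)
  ultimately show ?thesis using young slack by (simp add: primal_value_def residual_def P_def SW_def)
qed

lemma dual_obj_le_primal_obj:
  assumes W0: "\<forall>i\<in>idx K n. 0 \<le> (\<Sum>k<K. Wf k i)"
    and Z: "\<forall>i\<in>idx K n. Z i = restr \<Omega> Z i" and S: "\<forall>i\<in>idx K n. 0 \<le> S i"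
  shows "ereal (dual_obj K n \<Omega> Y C lam \<Theta> Z S) \<le> primal_obj K n \<Omega> Y C lam \<Theta> Wf"
proof (cases "\<forall>k<K. in_mode_range K n k (\<Theta> k) (Wf k)")
  case True
  hence "Wf \<in> primal_feasible K n \<Theta>" using W0 by (simp add: primal_feasible_def)
  thus ?thesis using dual_obj_le_primal_value[OF _ Z S] primal_obj_eq[OF sp lam] True by simp
next
  case False
  hence "primal_obj K n \<Omega> Y C lam \<Theta> Wf = \<infinity>" by (simp only: primal_obj_eq[OF sp lam] if_False)
  thus ?thesis by simp
qed

lemma primal_value_bounds:
  assumes W: "Wf \<in> primal_feasible K n \<Theta>"
  shows "0 \<le> F Wf" "\<And>k i. k < K \<Longrightarrow> i \<in> idx K n \<Longrightarrow> (Wf k i)\<^sup>2 \<le> 2 * lam k * F Wf"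
proof -
  define q where "q = (\<lambda>k. 1 / (2 * lam k) * tinner K n (Wf k) (mode_mult n k (pinv (n k) (\<Theta> k)) (Wf k)))"
  have R: "\<forall>k<K. in_mode_range K n k (\<Theta> k) (Wf k)" using W by (simp add: primal_feasible_def)
  have q0: "0 \<le> q k" if k: "k < K" for k
  proof -
    have "0 \<le> tinner K n (Wf k) (mode_mult n k (pinv (n k) (\<Theta> k)) (Wf k))"
      using pinv_quadratic_bounds(1)[where n=n, OF k] sp R k by blast
    moreover have "lam k > 0" using lam k by simp
    ultimately show ?thesis by (simp add: q_def)
  qed
  have fit: "0 \<le> C * tnorm2 K n (residual K \<Omega> Y Wf)"
    unfolding tnorm2_def tinner_def by (intro mult_nonneg_nonneg[OF less_imp_le[OF C]] sum_nonneg) simp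
  have F: "F Wf = C * tnorm2 K n (residual K \<Omega> Y Wf) + (\<Sum>k<K. q k)"
    by (simp add: primal_value_def q_def)
  have qF: "q k \<le> F Wf" if "k < K" for k
    using member_le_sum[of k "{..<K}" q] q0 that fit unfolding F by simp
  have "0 \<le> (\<Sum>k<K. q k)" using q0 by (intro sum_nonneg) simp
  thus "0 \<le> F Wf" unfolding F using fit by linarith
  fix k i assume k: "k < K" and i: "i \<in> idx K n"
  have lk: "lam k > 0" using lam k by simp
  have "(Wf k i)\<^sup>2 \<le> tnorm2 K n (Wf k)"
    using member_le_sum[OF i, of "\<lambda>i. Wf k i * Wf k i"] finite_idx
    by (simp add: tnorm2_def tinner_def power2_eq_square)
  also have "\<dots> \<le> 2 * lam k * q k"
    using pinv_quadratic_bounds(2)[where n=n, OF k] sp R lk k by (simp add: q_def)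
  also have "\<dots> \<le> 2 * lam k * F Wf" using qF[OF k] lk by simp
  finally show "(Wf k i)\<^sup>2 \<le> 2 * lam k * F Wf" .
qed

lemma primal_feasible_sublevel_convergent_subseq:
  fixes Ws :: "nat \<Rightarrow> nat \<Rightarrow> (nat \<Rightarrow> nat) \<Rightarrow> real"
  assumes Ws: "\<And>j. Ws j \<in> primal_feasible K n \<Theta>" and M: "\<And>j. F (Ws j) \<le> M"
  shows "\<exists>r W. strict_mono r \<and> W \<in> primal_feasible K n \<Theta> \<and>
           (\<forall>k<K. \<forall>i\<in>idx K n. (\<lambda>j. Ws (r j) k i) \<longlonglongrightarrow> W k i)"
proof -
  have bnd: "\<bar>Ws j (fst p) (snd p)\<bar> \<le> 1 + 2 * lam (fst p) * M"
    if "p \<in> {..<K} \<times> idx K n" for j p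
  proof -
    have "(Ws j (fst p) (snd p))\<^sup>2 \<le> 2 * lam (fst p) * F (Ws j)"
      using primal_value_bounds(2)[OF Ws] that by auto
    also have "\<dots> \<le> 2 * lam (fst p) * M" using M lam that by (intro mult_left_mono) auto
    finally show ?thesis using abs_le_one_plus_square[of "Ws j (fst p) (snd p)"] by simp
  qed
  have "\<exists>r L. strict_mono r \<and> (\<forall>p\<in>{..<K} \<times> idx K n. (\<lambda>j. Ws (r j) (fst p) (snd p)) \<longlonglongrightarrow> L p)"
    by (rule bounded_coordinates_convergent_subseq[where x="\<lambda>j p. Ws j (fst p) (snd p)"
          and B="\<lambda>p. 1 + 2 * lam (fst p) * M"])
      (use bnd finite_idx in auto)
  then obtain r L where r: "strict_mono r"
    and L: "\<forall>p\<in>{..<K} \<times> idx K n. (\<lambda>j. Ws (r j) (fst p) (snd p)) \<longlonglongrightarrow> L p"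
    by blast
  define W where "W = (\<lambda>k i. L (k, i))"
  have lim: "\<forall>i\<in>idx K n. (\<lambda>j. Ws (r j) k i) \<longlonglongrightarrow> W k i" if "k < K" for k
    using L that by (auto simp: W_def)
  thus ?thesis using primal_feasible_closed[OF Ws lim] r by (intro exI[of _ r] exI[of _ W]) auto
qed

lemma primal_value_has_minimizer:
  "\<exists>W\<in>primal_feasible K n \<Theta>. \<forall>V\<in>primal_feasible K n \<Theta>. F W \<le> F V"
proof -
  define m where "m = (INF W\<in>primal_feasible K n \<Theta>. F W)"
  have zero: "(\<lambda>k i. 0) \<in> primal_feasible K n \<Theta>"
    by (simp add: primal_feasible_def in_mode_range_def mode_mult_def)
  have bdd: "bdd_below (F ` primal_feasible K n \<Theta>)"
    using primal_value_bounds(1) by (intro bdd_belowI[of _ 0]) auto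
  have m_le: "m \<le> F V" if "V \<in> primal_feasible K n \<Theta>" for V
    unfolding m_def using that bdd by (intro cINF_lower)
  have "\<forall>j. \<exists>W\<in>primal_feasible K n \<Theta>. F W < m + inverse (real (Suc j))"
  proof
    fix j
    have "(INF W\<in>primal_feasible K n \<Theta>. F W) < m + inverse (real (Suc j))" by (simp add: m_def)
    thus "\<exists>W\<in>primal_feasible K n \<Theta>. F W < m + inverse (real (Suc j))"
      using zero by (subst (asm) cINF_less_iff[OF _ bdd]) auto
  qed
  then obtain Ws where Ws: "\<And>j. Ws j \<in> primal_feasible K n \<Theta>"
    "\<And>j. F (Ws j) < m + inverse (real (Suc j))" by metis
  have bounded: "F (Ws j) \<le> m + 1" for j
    using Ws(2)[of j] inverse_le_1_iff[of "real (Suc j)"] by simp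
  obtain r W where r: "strict_mono r" and W: "W \<in> primal_feasible K n \<Theta>"
    and lim: "\<forall>k<K. \<forall>i\<in>idx K n. (\<lambda>j. Ws (r j) k i) \<longlonglongrightarrow> W k i"
    using primal_feasible_sublevel_convergent_subseq[where Ws=Ws, OF Ws(1) bounded] by blast
  have "(\<lambda>j. F (Ws (r j))) \<longlonglongrightarrow> F W" by (rule primal_value_tendsto) (simp add: lim)
  hence "F W \<le> m"
  proof (rule LIMSEQ_le)
    have "(\<lambda>j. inverse (real (Suc (r j)))) \<longlonglongrightarrow> 0"
      using LIMSEQ_subseq_LIMSEQ[OF LIMSEQ_inverse_real_of_nat r] by (simp add: comp_def)
    thus "(\<lambda>j. m + inverse (real (Suc (r j)))) \<longlonglongrightarrow> m"
      using tendsto_add[OF tendsto_const[of m]] by fastforce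
    show "\<exists>N. \<forall>j\<ge>N. F (Ws (r j)) \<le> m + inverse (real (Suc (r j)))"
      using Ws(2) less_imp_le by blast
  qed
  thus ?thesis using W m_le by force
qed

abbreviation (input) grad :: "(nat \<Rightarrow> (nat \<Rightarrow> nat) \<Rightarrow> real) \<Rightarrow> nat \<Rightarrow> (nat \<Rightarrow> nat) \<Rightarrow> real" where
  "grad \<equiv> primal_gradient K n \<Omega> Y C lam \<Theta>"

lemma primal_value_add_scaled:
  "F (\<lambda>k i. W k i + t * D k i) = F W + t * (\<Sum>k<K. tinner K n (D k) (grad W k))
     + t\<^sup>2 * (C * tnorm2 K n (restr \<Omega> (\<lambda>i. \<Sum>k<K. D k i))
        + (\<Sum>k<K. 1 / (2 * lam k) * tinner K n (D k) (mode_mult n k (pinv (n k) (\<Theta> k)) (D k))))"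
proof -
  define r where "r = residual K \<Omega> Y W"
  define d where "d = restr \<Omega> (\<lambda>i. \<Sum>k<K. D k i)"
  have res: "residual K \<Omega> Y (\<lambda>k i. W k i + t * D k i) = (\<lambda>i. r i + t * d i)"
    by (auto simp: r_def d_def residual_def restr_def sum.distrib sum_distrib_left)
  have "tinner K n r d = tinner K n r (\<lambda>i. \<Sum>k<K. D k i)"
    unfolding tinner_def d_def by (intro sum.cong refl) (auto simp: r_def residual_def restr_def)
  hence rd: "tinner K n r d = (\<Sum>k<K. tinner K n (D k) r)" by (simp add: tinner_sum_right tinner_commute)
  have pen: "tinner K n (\<lambda>i. W k i + t * D k i) (mode_mult n k (pinv (n k) (\<Theta> k)) (\<lambda>i. W k i + t * D k i))
     = tinner K n (W k) (mode_mult n k (pinv (n k) (\<Theta> k)) (W k))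
       + 2 * t * tinner K n (D k) (mode_mult n k (pinv (n k) (\<Theta> k)) (W k))
       + t\<^sup>2 * tinner K n (D k) (mode_mult n k (pinv (n k) (\<Theta> k)) (D k))" if k: "k < K" for k
  proof -
    have one: "(\<lambda>i. W k i + t * D k i) = (\<lambda>i. 1 * W k i + t * D k i)" by simp
    have "\<forall>a<n k. \<forall>b<n k. pinv (n k) (\<Theta> k) a b = pinv (n k) (\<Theta> k) b a"
      using spectraplex_pinv(2) sp k by blast
    hence "tinner K n (W k) (mode_mult n k (pinv (n k) (\<Theta> k)) (D k))
        = tinner K n (D k) (mode_mult n k (pinv (n k) (\<Theta> k)) (W k))"
      by (rule tinner_mode_mult_sym[where n=n, OF k])
    thus ?thesis unfolding one mode_mult_lincomb tinner_lincomb_left tinner_lincomb_right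
      by (simp add: algebra_simps power2_eq_square)
  qed
  have "tinner K n (D k) (grad W k) = 2 * C * tinner K n (D k) r
      + 1 / lam k * tinner K n (D k) (mode_mult n k (pinv (n k) (\<Theta> k)) (W k))" for k
    unfolding primal_gradient_def r_def by (rule tinner_lincomb_right)
  thus ?thesis
    unfolding primal_value_def res tnorm2_add_scaled d_def[symmetric] r_def[symmetric] using pen rd
    by (simp add: sum.distrib sum_distrib_left sum_distrib_right algebra_simps)
qed

text \<open>Directions \<open>D\<^sub>k = \<Theta>\<^sub>k X\<^sub>k\<close> keep every \<open>W\<^sub>k\<close> in the range of \<open>\<Theta>\<^sub>k\<close>; nonnegativity of
  \<open>\<Sum>\<^sub>k W\<^sub>k\<close> only has to be checked at the active entries, where it is zero.\<close>

lemma primal_feasible_add_scaled_eventually: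
  assumes W: "W \<in> primal_feasible K n \<Theta>"
    and act: "\<forall>i\<in>idx K n. (\<Sum>k<K. W k i) = 0 \<longrightarrow> 0 \<le> (\<Sum>k<K. mode_mult n k (\<Theta> k) (X k) i)"
  shows "\<forall>\<^sub>F t in at_right 0. (\<lambda>k i. W k i + t * mode_mult n k (\<Theta> k) (X k) i) \<in> primal_feasible K n \<Theta>"
proof -
  define D where "D = (\<lambda>k. mode_mult n k (\<Theta> k) (X k))"
  have "in_mode_range K n k (\<Theta> k) (\<lambda>i. W k i + t * D k i)" if k: "k < K" for k t
  proof -
    have "\<forall>i\<in>idx K n. W k i = mode_mult n k (\<Theta> k) (mode_mult n k (pinv (n k) (\<Theta> k)) (W k)) i"
      using W k by (auto simp: primal_feasible_def in_mode_range_def)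
    hence "\<forall>i\<in>idx K n. W k i + t * D k i
        = mode_mult n k (\<Theta> k) (\<lambda>i. 1 * mode_mult n k (pinv (n k) (\<Theta> k)) (W k) i + t * X k i) i"
      unfolding mode_mult_lincomb D_def by simp
    thus ?thesis using in_mode_range_iff[where n=n, OF k] sp k by blast
  qed
  moreover have "\<forall>\<^sub>F t in at_right 0. \<forall>i\<in>idx K n. 0 \<le> (\<Sum>k<K. W k i + t * D k i)"
  proof (rule eventually_ball_finite[OF finite_idx], rule ballI)
    fix i assume i: "i \<in> idx K n"
    have "0 \<le> (\<Sum>k<K. W k i)" using W i by (auto simp: primal_feasible_def)
    moreover have "(\<Sum>k<K. W k i) = 0 \<Longrightarrow> 0 \<le> (\<Sum>k<K. D k i)" using act i by (simp add: D_def)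
    ultimately have "\<forall>\<^sub>F t in at_right 0. 0 \<le> (\<Sum>k<K. W k i) + t * (\<Sum>k<K. D k i)"
      by (rule eventually_at_right_nonneg_add_scaled)
    thus "\<forall>\<^sub>F t in at_right 0. 0 \<le> (\<Sum>k<K. W k i + t * D k i)"
      by (simp add: sum.distrib sum_distrib_left)
  qed
  ultimately show ?thesis unfolding D_def by (auto simp: primal_feasible_def elim!: eventually_mono)
qed

lemma minimizer_first_order:
  assumes W: "W \<in> primal_feasible K n \<Theta>" and min: "\<forall>V\<in>primal_feasible K n \<Theta>. F W \<le> F V"
    and act: "\<forall>i\<in>idx K n. (\<Sum>k<K. W k i) = 0 \<longrightarrow> 0 \<le> (\<Sum>k<K. mode_mult n k (\<Theta> k) (X k) i)"
  shows "0 \<le> (\<Sum>k<K. tinner K n (mode_mult n k (\<Theta> k) (X k)) (grad W k))"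
proof -
  define D where "D = (\<lambda>k. mode_mult n k (\<Theta> k) (X k))"
  define L where "L = (\<Sum>k<K. tinner K n (D k) (grad W k))"
  define Q where "Q = C * tnorm2 K n (restr \<Omega> (\<lambda>i. \<Sum>k<K. D k i))
        + (\<Sum>k<K. 1 / (2 * lam k) * tinner K n (D k) (mode_mult n k (pinv (n k) (\<Theta> k)) (D k)))"
  have "\<forall>\<^sub>F t in at_right 0. 0 \<le> L + t * Q"
    using primal_feasible_add_scaled_eventually[OF W act] eventually_at_right_less[of "0::real"]
  proof eventually_elim
    case (elim t)
    hence "F W \<le> F (\<lambda>k i. W k i + t * D k i)" using min by (simp add: D_def)
    hence "F W \<le> F W + t * L + t\<^sup>2 * Q" unfolding primal_value_add_scaled L_def Q_def .
    hence "0 \<le> t * (L + t * Q)" by (simp add: algebra_simps power2_eq_square)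
    thus ?case using elim(2) by (simp add: zero_le_mult_iff)
  qed
  moreover have "((\<lambda>t. L + t * Q) \<longlongrightarrow> L + 0 * Q) (at_right 0)" by (intro tendsto_intros)
  ultimately have "0 \<le> L + 0 * Q" by (intro tendsto_lowerbound) auto
  thus ?thesis by (simp add: L_def D_def)
qed

text \<open>Farkas' lemma, with one generator \<open>(\<Theta>\<^sub>k e\<^sub>g)\<^sub>k\<close> per active entry \<open>g\<close>, turns the first-order
  condition into a Lagrange multiplier \<open>S \<ge> 0\<close> for the constraint \<open>\<Sum>\<^sub>k W\<^sub>k \<ge> 0\<close>.\<close>

lemma minimizer_multiplier:
  assumes W: "W \<in> primal_feasible K n \<Theta>" and min: "\<forall>V\<in>primal_feasible K n \<Theta>. F W \<le> F V"
  shows "\<exists>S. (\<forall>i\<in>idx K n. 0 \<le> S i) \<and> (\<forall>i\<in>idx K n. S i \<noteq> 0 \<longrightarrow> (\<Sum>k<K. W k i) = 0)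
      \<and> (\<forall>k<K. \<forall>j\<in>idx K n. mode_mult n k (\<Theta> k) (grad W k) j = mode_mult n k (\<Theta> k) S j)"
proof -
  define A where "A = {i \<in> idx K n. (\<Sum>k<K. W k i) = 0}"
  define I where "I = {..<K} \<times> idx K n"
  define a where "a = (\<lambda>g (p :: nat \<times> (nat \<Rightarrow> nat)).
    mode_mult n (fst p) (\<Theta> (fst p)) (\<lambda>i. if i = g then 1 else 0) (snd p))"
  define c where "c = (\<lambda>p :: nat \<times> (nat \<Rightarrow> nat). mode_mult n (fst p) (\<Theta> (fst p)) (grad W (fst p)) (snd p))"
  have sym: "\<forall>k<K. \<forall>a<n k. \<forall>b<n k. \<Theta> k a b = \<Theta> k b a"
    using sp by (simp add: spectraplex_def)
  have hyp: "\<forall>y. (\<forall>g\<in>A. 0 \<le> dot_on I y (a g)) \<longrightarrow> 0 \<le> dot_on I y c"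
  proof (intro allI impI)
    fix y assume "\<forall>g\<in>A. 0 \<le> dot_on I y (a g)"
    hence "\<forall>i\<in>idx K n. (\<Sum>k<K. W k i) = 0 \<longrightarrow> 0 \<le> (\<Sum>k<K. mode_mult n k (\<Theta> k) (\<lambda>j. y (k, j)) i)"
      by (auto simp: A_def I_def a_def dot_on_mode_mult_indicator[OF sym])
    from minimizer_first_order[OF W min this]
    show "0 \<le> dot_on I y c" by (simp add: I_def c_def dot_on_mode_mult[OF sym])
  qed
  have A: "finite A" and I: "finite I" using finite_idx by (simp_all add: A_def I_def)
  obtain \<mu> where \<mu>: "\<forall>g\<in>A. 0 \<le> \<mu> g" "\<forall>p\<in>I. c p = (\<Sum>g\<in>A. \<mu> g * a g p)"
    using farkas_lemma[OF I A hyp] by blast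
  define S where "S = (\<lambda>i. if i \<in> A then \<mu> i else 0)"
  have "mode_mult n k (\<Theta> k) (grad W k) j = mode_mult n k (\<Theta> k) S j" if "k < K" "j \<in> idx K n" for k j
    using \<mu>(2) that mode_mult_indicator_combination[OF A] by (simp add: I_def a_def c_def S_def)
  moreover have "\<forall>i\<in>idx K n. 0 \<le> S i" using \<mu>(1) by (simp add: S_def)
  moreover have "\<forall>i\<in>idx K n. S i \<noteq> 0 \<longrightarrow> (\<Sum>k<K. W k i) = 0" by (auto simp: S_def A_def)
  ultimately show ?thesis by (intro exI[of _ S]) auto
qed

lemma minimizer_stationarity:
  assumes W: "W \<in> primal_feasible K n \<Theta>"
    and SG: "\<forall>k<K. \<forall>j\<in>idx K n. mode_mult n k (\<Theta> k) (grad W k) j = mode_mult n k (\<Theta> k) S j"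
    and k: "k < K" and j: "j \<in> idx K n"
  shows "W k j = lam k * mode_mult n k (\<Theta> k) (\<lambda>i. - 2 * C * residual K \<Omega> Y W i + S i) j"
proof -
  let ?r = "residual K \<Omega> Y W"
  have lk: "lam k > 0" using lam k by simp
  have "mode_mult n k (\<Theta> k) (mode_mult n k (pinv (n k) (\<Theta> k)) (W k)) j = W k j"
    using W k j by (auto simp: primal_feasible_def in_mode_range_def)
  hence "mode_mult n k (\<Theta> k) (grad W k) j = 2 * C * mode_mult n k (\<Theta> k) ?r j + 1 / lam k * W k j"
    unfolding primal_gradient_def mode_mult_lincomb by simp
  hence "W k j = lam k * (mode_mult n k (\<Theta> k) S j - 2 * C * mode_mult n k (\<Theta> k) ?r j)"
    using SG k j lk by (simp add: field_simps)
  moreover have "mode_mult n k (\<Theta> k) (\<lambda>i. - 2 * C * ?r i + S i) j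
      = mode_mult n k (\<Theta> k) S j - 2 * C * mode_mult n k (\<Theta> k) ?r j"
    unfolding mode_mult_def by (simp add: sum.distrib sum_distrib_left sum_subtractf algebra_simps)
  ultimately show ?thesis by simp
qed

lemma kkt_point_dual_obj_eq:
  fixes W :: "nat \<Rightarrow> (nat \<Rightarrow> nat) \<Rightarrow> real" and S :: "(nat \<Rightarrow> nat) \<Rightarrow> real"
  defines "Z \<equiv> (\<lambda>i. - 2 * C * residual K \<Omega> Y W i)"
  assumes WV: "\<forall>k<K. \<forall>i\<in>idx K n. W k i = lam k * mode_mult n k (\<Theta> k) (\<lambda>i. Z i + S i) i"
    and slack: "\<forall>i\<in>idx K n. S i \<noteq> 0 \<longrightarrow> (\<Sum>k<K. W k i) = 0"
  shows "dual_obj K n \<Omega> Y C lam \<Theta> Z S = F W"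
proof -
  define r where "r = residual K \<Omega> Y W"
  define SW where "SW = (\<lambda>i. \<Sum>k<K. W k i)"
  define V where "V = (\<lambda>i. Z i + S i)"
  define D where "D = (\<lambda>k. tinner K n V (mode_mult n k (\<Theta> k) V))"
  have pen: "1 / (2 * lam k) * tinner K n (W k) (mode_mult n k (pinv (n k) (\<Theta> k)) (W k)) = lam k / 2 * D k"
    if k: "k < K" for k
  proof -
    have "\<forall>i\<in>idx K n. W k i = lam k * mode_mult n k (\<Theta> k) V i" using WV k by (simp add: V_def)
    hence "tinner K n (W k) (mode_mult n k (pinv (n k) (\<Theta> k)) (W k)) = (lam k)\<^sup>2 * D k"
      using penalty_eq_at_range_point[where n=n, OF k] sp k by (simp add: D_def)
    moreover have "lam k > 0" using lam k by simp
    ultimately show ?thesis by (simp add: power2_eq_square)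
  qed
  have "(\<Sum>k<K. 1 / (2 * lam k) * tinner K n (W k) (mode_mult n k (pinv (n k) (\<Theta> k)) (W k)))
      = (\<Sum>k<K. lam k / 2 * D k)"
    by (rule sum.cong[OF refl], rule pen) simp
  hence FW: "F W = C * tnorm2 K n r + (\<Sum>k<K. lam k / 2 * D k)"
    unfolding primal_value_def r_def by simp
  have "tinner K n Z (restr \<Omega> SW) = tinner K n V SW"
    unfolding tinner_def V_def using slack
    by (intro sum.cong refl) (auto simp: Z_def SW_def residual_def restr_def algebra_simps)
  also have "\<dots> = (\<Sum>k<K. tinner K n V (W k))" unfolding SW_def tinner_sum_right ..
  also have "\<dots> = (\<Sum>k<K. lam k * D k)"
    using WV by (intro sum.cong refl) (simp add: D_def V_def tinner_def sum_distrib_left algebra_simps)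
  finally have coupling: "tinner K n Z (restr \<Omega> SW) = 2 * (\<Sum>k<K. lam k / 2 * D k)"
    by (simp add: sum_distrib_left)
  have "C * tnorm2 K n r + 1 / (4 * C) * tnorm2 K n Z - tinner K n Z (restr \<Omega> Y)
      + tinner K n Z (restr \<Omega> SW) = 0"
    using completing_square[OF C, where \<Omega>=\<Omega> and W=SW and Y=Y and Z=Z and K=K and n=n]
    by (simp add: Z_def r_def residual_def SW_def)
  moreover have "dual_obj K n \<Omega> Y C lam \<Theta> Z S
      = tinner K n Z (restr \<Omega> Y) - 1 / (4 * C) * tnorm2 K n Z - (\<Sum>k<K. lam k / 2 * D k)"
    unfolding dual_obj_def D_def V_def by (simp add: unfold_qf_eq_tinner)
  ultimately show ?thesis using FW coupling by simp
qed

lemma minimizer_dual_value: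
  assumes W: "W \<in> primal_feasible K n \<Theta>" and min: "\<forall>V\<in>primal_feasible K n \<Theta>. F W \<le> F V"
  shows "\<exists>Z S. (\<forall>i\<in>idx K n. Z i = restr \<Omega> Z i) \<and> (\<forall>i\<in>idx K n. 0 \<le> S i)
            \<and> dual_obj K n \<Omega> Y C lam \<Theta> Z S = F W"
proof -
  obtain S where S0: "\<forall>i\<in>idx K n. 0 \<le> S i"
    and slack: "\<forall>i\<in>idx K n. S i \<noteq> 0 \<longrightarrow> (\<Sum>k<K. W k i) = 0"
    and SG: "\<forall>k<K. \<forall>j\<in>idx K n. mode_mult n k (\<Theta> k) (grad W k) j = mode_mult n k (\<Theta> k) S j"
    using minimizer_multiplier[OF W min] by blast
  define Z where "Z = (\<lambda>i. - 2 * C * residual K \<Omega> Y W i)"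
  have "\<forall>k<K. \<forall>i\<in>idx K n. W k i = lam k * mode_mult n k (\<Theta> k) (\<lambda>i. Z i + S i) i"
    using minimizer_stationarity[OF W SG] by (simp add: Z_def)
  hence "dual_obj K n \<Omega> Y C lam \<Theta> Z S = F W"
    using kkt_point_dual_obj_eq[OF _ slack] by (simp add: Z_def)
  moreover have "\<forall>i\<in>idx K n. Z i = restr \<Omega> Z i" by (simp add: Z_def residual_def restr_def)
  ultimately show ?thesis using S0 by blast
qed

lemma strong_duality_for_fixed_Theta:
  "(INF Wf\<in>{Wf. \<forall>i\<in>idx K n. 0 \<le> (\<Sum>k<K. Wf k i)}. primal_obj K n \<Omega> Y C lam \<Theta> Wf)
   = (SUP q\<in>{(Z, S). (\<forall>i\<in>idx K n. Z i = restr \<Omega> Z i) \<and> (\<forall>i\<in>idx K n. 0 \<le> S i)}.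
        ereal (dual_obj K n \<Omega> Y C lam \<Theta> (fst q) (snd q)))"
  (is "?P = ?D")
proof (rule antisym)
  obtain W where W: "W \<in> primal_feasible K n \<Theta>" and min: "\<forall>V\<in>primal_feasible K n \<Theta>. F W \<le> F V"
    using primal_value_has_minimizer by blast
  obtain Z S where Z: "\<forall>i\<in>idx K n. Z i = restr \<Omega> Z i" and S: "\<forall>i\<in>idx K n. 0 \<le> S i"
    and eq: "dual_obj K n \<Omega> Y C lam \<Theta> Z S = F W"
    using minimizer_dual_value[OF W min] by blast
  have "?P \<le> primal_obj K n \<Omega> Y C lam \<Theta> W"
    using W by (intro INF_lower) (simp add: primal_feasible_def)
  also have "\<dots> = ereal (dual_obj K n \<Omega> Y C lam \<Theta> Z S)"
    using W eq by (simp add: primal_obj_eq[OF sp lam] primal_feasible_def)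
  also have "\<dots> \<le> ?D" using Z S by (intro SUP_upper2[of "(Z, S)"]) auto
  finally show "?P \<le> ?D" .
  show "?D \<le> ?P"
    by (intro SUP_least INF_greatest) (auto intro: dual_obj_le_primal_obj)
qed

end

theorem theorem2:
  fixes K :: nat and n :: "nat \<Rightarrow> nat" and \<Omega> :: "(nat \<Rightarrow> nat) set"
    and Y :: "(nat \<Rightarrow> nat) \<Rightarrow> real" and C :: real and lam :: "nat \<Rightarrow> real"
  assumes "K \<ge> 1"
    and "\<forall>k<K. n k > 0"
    and "\<Omega> \<subseteq> idx K n"
    and "\<forall>i. i \<notin> \<Omega> \<longrightarrow> Y i = 0"
    and "C > 0"
    and "\<forall>k<K. lam k > 0"
  shows "(INF p \<in> {(\<Theta>, Wf). (\<forall>k<K. spectraplex (n k) (\<Theta> k)) \<and>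
                              (\<forall>i\<in>idx K n. 0 \<le> (\<Sum>k<K. Wf k i))}.
            primal_obj K n \<Omega> Y C lam (fst p) (snd p))
       = (INF \<Theta> \<in> {\<Theta>. \<forall>k<K. spectraplex (n k) (\<Theta> k)}.
            SUP q \<in> {(Z, S). (\<forall>i\<in>idx K n. Z i = restr \<Omega> Z i) \<and> (\<forall>i\<in>idx K n. 0 \<le> S i)}.
              ereal (dual_obj K n \<Omega> Y C lam \<Theta> (fst q) (snd q)))"
  (is "?L = ?R")
proof -
  let ?A = "{\<Theta>. \<forall>k<K. spectraplex (n k) (\<Theta> k)}"
  let ?B = "{Wf. \<forall>i\<in>idx K n. 0 \<le> (\<Sum>k<K. Wf k i)}"
  have "?L = (INF p \<in> ?A \<times> ?B. primal_obj K n \<Omega> Y C lam (fst p) (snd p))"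
    by (rule INF_cong) auto
  also have "\<dots> = (INF \<Theta> \<in> ?A. INF Wf \<in> ?B. primal_obj K n \<Omega> Y C lam \<Theta> Wf)"
    by (rule INF_pair[symmetric])
  also have "\<dots> = ?R"
    using strong_duality_for_fixed_Theta assms(5,6) by (intro INF_cong) auto
  finally show ?thesis .
qed

end
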